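(* Let $\mathfrak{b}\subset\mathfrak{g}=\mathfrak{gl}(n+1,\mathbb{C})$ be a Borel subalgebra with nilradical $\mathfrak{n}$, and suppose that the $K_{n+1}$-orbit of $\mathfrak{b}$ in $\mathcal{B}_{n+1}$ is not closed. Then $\pi_{\mathfrak{k}_{n+1}}(\mathfrak{n}^{reg})\cap\mathcal{N}_{\mathfrak{k}_{n+1}}=\emptyset$; that is, for no element $y\in\mathfrak{n}$ which is regular in $\mathfrak{g}$ is $\pi_{\mathfrak{k}_{n+1}}(y)$ nilpotent.
   Context: $n\ge1$. $\theta$ is the involution of $\mathfrak{g}$ given by conjugation by $\mathrm{diag}(1,\dots,1,-1)$; $\mathfrak{g}=\mathfrak{k}_{n+1}\oplus\mathfrak{p}_{n+1}$ is the decomposition into the $+1$ and $-1$ eigenspaces of $\theta$, so $\mathfrak{k}_{n+1}=\mathfrak{gl}(n,\mathbb{C})\oplus\mathfrak{gl}(1,\mathbb{C})$ is the block diagonal matrices with blocks of sizes $n$ and $1$. $\pi_{\mathfrak{k}_{n+1}}:\mathfrak{g}\to\mathfrak{k}_{n+1}$ is the projection along $\mathfrak{p}_{n+1}$, and $\mathcal{N}_{\mathfrak{k}_{n+1}}$ is the set of nilpotent elements of $\mathfrak{k}_{n+1}$. $K_{n+1}=GL(n,\mathbb{C})\times GL(1,\mathbb{C})$ is the corresponding group of invertible block diagonal matrices, acting by conjugation on the flag variety $\mathcal{B}_{n+1}$ of $\mathfrak{g}$. $\mathfrak{n}^{reg}$ denotes the set of elements of $\mathfrak{n}$ that are regular in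 $\mathfrak{g}$ (the regular nilpotent elements of $\mathfrak{b}$). *)

theory Defs
  imports Complex_Main "Jordan_Normal_Form.Matrix"
begin

text \<open>Matrices in gl(N,C) are N x N complex matrices (N = n+1).
  Indices run over 0..N-1; the last index n carries the GL(1) block.\<close>

definition inv_pair :: "nat \<Rightarrow> complex mat \<Rightarrow> complex mat \<Rightarrow> bool" where
  "inv_pair N g h \<longleftrightarrow> g \<in> carrier_mat N N \<and> h \<in> carrier_mat N N \<and>
     g * h = 1\<^sub>m N \<and> h * g = 1\<^sub>m N"

text \<open>conjugation x |-> g x g^{-1}, with h = g^{-1}\<close>
definition conj_set :: "complex mat \<Rightarrow> complex mat \<Rightarrow> complex mat set \<Rightarrow> complex mat set" where
  "conj_set g h S = (\<lambda>A. g * A * h) ` S"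

text \<open>standard Borel subalgebra (upper triangular) and its nilradical (strictly upper)\<close>
definition upper_tri :: "nat \<Rightarrow> complex mat set" where
  "upper_tri N = {A \<in> carrier_mat N N. \<forall>i<N. \<forall>j<N. j < i \<longrightarrow> A $$ (i,j) = 0}"

definition strict_upper_tri :: "nat \<Rightarrow> complex mat set" where
  "strict_upper_tri N = {A \<in> carrier_mat N N. \<forall>i<N. \<forall>j<N. j \<le> i \<longrightarrow> A $$ (i,j) = 0}"

text \<open>Flag variety: the set of Borel subalgebras, i.e. the G-conjugates of upper_tri\<close>
definition flag_variety :: "nat \<Rightarrow> complex mat set set" where
  "flag_variety N = {conj_set g h (upper_tri N) | g h. inv_pair N g h}"

text \<open>K_{n+1} = GL(n) x GL(1): invertible block diagonal matrices of size n+1\<close>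
definition block_diag :: "nat \<Rightarrow> complex mat \<Rightarrow> bool" where
  "block_diag n k \<longleftrightarrow> (\<forall>i\<le>n. \<forall>j\<le>n. (i < n) \<noteq> (j < n) \<longrightarrow> k $$ (i,j) = 0)"

definition K_orbit :: "nat \<Rightarrow> complex mat set \<Rightarrow> complex mat set set" where
  "K_orbit n b = {conj_set k k' b | k k'. inv_pair (n+1) k k' \<and> block_diag n k \<and> block_diag n k'}"

text \<open>Topology on the flag variety G/B: the quotient topology of the (analytic) topology of
  GL(N,C) under g |-> g b_0 g^{-1}.  A set of Borels is closed iff its preimage in GL(N,C)
  is closed in GL(N,C) (sequentially, w.r.t. entrywise convergence).  For K-orbits,
  analytic closedness coincides with Zariski closedness.\<close>
definition mat_converges :: "nat \<Rightarrow> (nat \<Rightarrow> complex mat) \<Rightarrow> complex mat \<Rightarrow> bool" where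
  "mat_converges N s g \<longleftrightarrow> (\<forall>i<N. \<forall>j<N. (\<lambda>k. s k $$ (i,j)) \<longlonglongrightarrow> g $$ (i,j))"

definition flag_closed :: "nat \<Rightarrow> complex mat set set \<Rightarrow> bool" where
  "flag_closed N Orb \<longleftrightarrow>
     (\<forall>s s' g h. (\<forall>k. inv_pair N (s k) (s' k) \<and> conj_set (s k) (s' k) (upper_tri N) \<in> Orb)
        \<and> inv_pair N g h \<and> mat_converges N s g
        \<longrightarrow> conj_set g h (upper_tri N) \<in> Orb)"

definition nilpotent_mat :: "nat \<Rightarrow> complex mat \<Rightarrow> bool" where
  "nilpotent_mat N x \<longleftrightarrow> (\<exists>k. x ^\<^sub>m k = 0\<^sub>m N N)"

text \<open>regular elements: the centralizer has dimension N (the minimum possible)\<close>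
definition centralizer :: "nat \<Rightarrow> complex mat \<Rightarrow> complex mat set" where
  "centralizer N x = {z \<in> carrier_mat N N. z * x = x * z}"

definition mat_lin_indep :: "nat \<Rightarrow> complex mat set \<Rightarrow> bool" where
  "mat_lin_indep N S \<longleftrightarrow> (\<forall>c :: complex mat \<Rightarrow> complex.
      (\<forall>i<N. \<forall>j<N. (\<Sum>A\<in>S. c A * A $$ (i,j)) = 0) \<longrightarrow> (\<forall>A\<in>S. c A = 0))"

definition subspace_dim :: "nat \<Rightarrow> complex mat set \<Rightarrow> nat" where
  "subspace_dim N V = (GREATEST d. \<exists>S. finite S \<and> S \<subseteq> V \<and> mat_lin_indep N S \<and> card S = d)"

definition regular_mat :: "nat \<Rightarrow> complex mat \<Rightarrow> bool" where
  "regular_mat N x \<longleftrightarrow> x \<in> carrier_mat N N \<and> subspace_dim N (centralizer N x) = N"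

text \<open>projection gl(n+1) -> k_{n+1} along p_{n+1}\<close>
definition proj_k :: "nat \<Rightarrow> complex mat \<Rightarrow> complex mat" where
  "proj_k n x = mat (n+1) (n+1) (\<lambda>(i,j). if (i < n) = (j < n) then x $$ (i,j) else 0)"

end

theory Submission
  imports Defs "Jordan_Normal_Form.Jordan_Normal_Form_Existence"
begin

text \<open>Write \<open>y = g u g\<^sup>-\<^sup>1\<close> with \<open>u\<close> strictly upper triangular. A nilpotent \<open>y\<close> with
  \<open>y\<^sup>n = 0\<close> has at least two Jordan blocks, and then its centralizer has dimension at least
  \<open>n + 2\<close>; so regularity forces \<open>y\<^sup>n \<noteq> 0\<close>, i.e. \<open>u\<close> has no zero on its superdiagonal.
  If \<open>\<pi>\<^sub>k(y)\<close> were nilpotent as well, decomposing walks from \<open>n\<close> to \<open>n\<close> at their visits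
  to \<open>n\<close> gives a convolution recursion forcing \<open>(y\<^sup>m)\<^sub>n\<^sub>n = 0\<close> for all \<open>m \<ge> 1\<close>.
  Expanding these entries along the last row of \<open>g\<close> and the last column of \<open>g\<^sup>-\<^sup>1\<close>, and
  using \<open>(g g\<^sup>-\<^sup>1)\<^sub>n\<^sub>n = 1\<close>, yields a pivot \<open>p\<close> with \<open>g\<^sub>n\<^sub>j = 0\<close> for \<open>j < p\<close> and
  \<open>(g\<^sup>-\<^sup>1)\<^sub>j\<^sub>n = 0\<close> for \<open>j > p\<close>. This condition is stable under \<open>K\<close> on the left and the
  Borel subgroup on the right, characterizes the \<open>K\<close>-orbit of \<open>g B g\<^sup>-\<^sup>1\<close>, and survives
  limits, so that orbit would be closed.\<close>

lemma mult_carrier_mat_square[simp]: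
  "A \<in> carrier_mat n n \<Longrightarrow> B \<in> carrier_mat n n \<Longrightarrow> A * B \<in> carrier_mat n n"
  by auto

lemma sum_lessThan_single:
  assumes "i < (N::nat)" "\<And>l. l < N \<Longrightarrow> l \<noteq> i \<Longrightarrow> f l = 0"
  shows "(\<Sum>l<N. f l) = (f i :: 'a :: comm_monoid_add)"
proof -
  have "(\<Sum>l<N. f l) = f i + (\<Sum>l\<in>{..<N} - {i}. f l)"
    using assms(1) by (subst sum.remove[of _ i]) auto
  also have "(\<Sum>l\<in>{..<N} - {i}. f l) = 0"
    using assms(2) by (intro sum.neutral) auto
  finally show ?thesis by simp
qed

lemma index_mult_mat_sum:
  assumes "A \<in> carrier_mat a b" "B \<in> carrier_mat b c" "i < a" "j < c"
  shows "(A * B) $$ (i,j) = (\<Sum>l<b. A $$ (i,l) * B $$ (l,j))"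
  using assms by (simp add: scalar_prod_def lessThan_atLeast0)

lemma index_conj_mat_sum:
  assumes "g \<in> carrier_mat N N" "A \<in> carrier_mat N N" "h \<in> carrier_mat N N" "a < N" "b < N"
  shows "(g * A * h) $$ (a,b) = (\<Sum>i<N. g $$ (a,i) * (\<Sum>j<N. A $$ (i,j) * h $$ (j,b)))"
proof -
  have "g * A * h = g * (A * h)"
    using assms by (simp add: assoc_mult_mat[of _ N N _ N _ N])
  moreover have "(g * (A * h)) $$ (a,b) = (\<Sum>i<N. g $$ (a,i) * (A * h) $$ (i,b))"
    using assms by (intro index_mult_mat_sum) auto
  moreover have "(A * h) $$ (i,b) = (\<Sum>j<N. A $$ (i,j) * h $$ (j,b))" if "i < N" for i
    using assms that by (intro index_mult_mat_sum) auto
  ultimately show ?thesis by (metis (no_types, lifting) lessThan_iff sum.cong)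
qed

lemma pow_mat_Suc_left:
  assumes "A \<in> carrier_mat n n"
  shows "A ^\<^sub>m Suc k = A * A ^\<^sub>m k"
  using assms
proof (induct k)
  case (Suc k)
  have "A ^\<^sub>m Suc (Suc k) = (A * A ^\<^sub>m k) * A" using Suc by simp
  also have "\<dots> = A * (A ^\<^sub>m k * A)" using Suc(2) by (simp add: assoc_mult_mat[of _ n n _ n _ n])
  finally show ?case by simp
qed simp

lemma pow_mat_add:
  assumes "A \<in> carrier_mat n n"
  shows "A ^\<^sub>m (a + b) = A ^\<^sub>m a * A ^\<^sub>m b"
  using assms
proof (induct b)
  case (Suc b)
  have "A ^\<^sub>m (a + Suc b) = (A ^\<^sub>m a * A ^\<^sub>m b) * A" using Suc by simp
  also have "\<dots> = A ^\<^sub>m a * (A ^\<^sub>m b * A)" using Suc(2) by (simp add: assoc_mult_mat[of _ n n _ n _ n])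
  finally show ?case by simp
qed simp

lemma pow_mat_zero_mono:
  assumes "A \<in> carrier_mat n n" "A ^\<^sub>m K = 0\<^sub>m n n" "K \<le> k"
  shows "A ^\<^sub>m k = 0\<^sub>m n n"
proof -
  obtain d where "k = K + d" using assms(3) le_Suc_ex by blast
  then show ?thesis using assms(1,2) by (simp add: pow_mat_add[OF assms(1)])
qed

lemma det_pow_mat:
  assumes "A \<in> carrier_mat n n"
  shows "det (A ^\<^sub>m e) = det A ^ e"
  by (induct e) (use assms det_mult[OF pow_carrier_mat[OF assms] assms] in simp_all)

lemma inv_pairD:
  assumes "inv_pair N g h"
  shows "g \<in> carrier_mat N N" "h \<in> carrier_mat N N" "g * h = 1\<^sub>m N" "h * g = 1\<^sub>m N"
  using assms unfolding inv_pair_def by auto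

lemma inv_pair_sym: "inv_pair N g h \<Longrightarrow> inv_pair N h g"
  unfolding inv_pair_def by auto

lemma inv_pair_det: "inv_pair N g h \<Longrightarrow> det g * det h = 1"
  by (metis inv_pairD det_mult det_one)

lemma inv_pair_det_nonzero: "inv_pair N g h \<Longrightarrow> det g \<noteq> 0"
  using inv_pair_det by fastforce

lemma inv_pair_cancel:
  assumes "inv_pair N a b" "Y \<in> carrier_mat N M"
  shows "a * (b * Y) = Y" "b * (a * Y) = Y"
  using inv_pairD[OF assms(1)] assms(2)
  by (simp_all add: assoc_mult_mat[symmetric, of _ N N _ N Y M])

lemma inv_pair_mult:
  assumes "inv_pair N a a'" "inv_pair N b b'"
  shows "inv_pair N (a * b) (b' * a')"
proof -
  note c = inv_pairD[OF assms(1)] inv_pairD[OF assms(2)]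
  have "a * b * (b' * a') = a * (b * (b' * a'))" "b' * a' * (a * b) = b' * (a' * (a * b))"
    using c by (simp_all add: assoc_mult_mat[of _ N N _ N _ N])
  then show ?thesis
    unfolding inv_pair_def using c inv_pair_cancel[OF assms(1)] inv_pair_cancel[OF assms(2)] by simp
qed

lemma inv_pair_right_unique:
  assumes "inv_pair N g h" "x \<in> carrier_mat N N" "g * x = 1\<^sub>m N"
  shows "x = h"
  using inv_pair_cancel(2)[OF assms(1,2)] assms(3) inv_pairD(2)[OF assms(1)] by simp

lemma inv_pair_if_det_nonzero:
  assumes A: "A \<in> carrier_mat N N" and "det A \<noteq> 0"
  shows "\<exists>B. inv_pair N A B"
proof -
  define B where "B = (1 / det A) \<cdot>\<^sub>m adj_mat A"
  have aA: "adj_mat A \<in> carrier_mat N N" using adj_mat[OF A] by auto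
  have "A * B = (1 / det A) \<cdot>\<^sub>m (A * adj_mat A)" "B * A = (1 / det A) \<cdot>\<^sub>m (adj_mat A * A)"
    unfolding B_def using aA A by (simp_all add: mult_smult_distrib mult_smult_assoc_mat)
  then have "A * B = 1\<^sub>m N" "B * A = 1\<^sub>m N"
    using adj_mat(2,3)[OF A] assms(2) by (auto intro!: eq_matI)
  then show ?thesis unfolding inv_pair_def using aA A B_def by (intro exI[of _ B]) simp
qed

lemma inv_pair_entry:
  assumes gh: "inv_pair N g h" and ij: "i < N" "j < N"
  shows "h $$ (i,j) = adj_mat g $$ (i,j) / det g"
proof -
  note c = inv_pairD[OF gh]
  have aC: "adj_mat g \<in> carrier_mat N N" using adj_mat(1)[OF c(1)] .
  have "adj_mat g = (adj_mat g * g) * h"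
    using aC c by (simp add: assoc_mult_mat[of _ N N _ N _ N])
  also have "\<dots> = det g \<cdot>\<^sub>m h"
    unfolding adj_mat(3)[OF c(1)] using c(2) by (simp add: mult_smult_assoc_mat[of _ N N h N])
  finally show ?thesis using ij c(2) inv_pair_det_nonzero[OF gh] by simp
qed

lemma pow_mat_conj:
  assumes "inv_pair N g h" "u \<in> carrier_mat N N"
  shows "(g * u * h) ^\<^sub>m k = g * u ^\<^sub>m k * h"
proof -
  have "similar_mat_wit (g * u * h) u g h"
    using inv_pairD[OF assms(1)] assms(2) unfolding similar_mat_wit_def by auto
  then show ?thesis by (rule similar_mat_wit_pow_id)
qed

lemma conj_set_conj_set:
  assumes "a \<in> carrier_mat N N" "a' \<in> carrier_mat N N" "b \<in> carrier_mat N N" "b' \<in> carrier_mat N N"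
    "S \<subseteq> carrier_mat N N"
  shows "conj_set a a' (conj_set b b' S) = conj_set (a * b) (b' * a') S"
  unfolding conj_set_def image_image
  using assms by (intro image_cong) (auto simp: assoc_mult_mat[of _ N N _ N _ N])

section \<open>Triangular matrices\<close>

lemma strict_upper_triD:
  assumes "u \<in> strict_upper_tri N"
  shows "u \<in> carrier_mat N N" "\<And>i j. i < N \<Longrightarrow> j < N \<Longrightarrow> j \<le> i \<Longrightarrow> u $$ (i,j) = 0"
  using assms unfolding strict_upper_tri_def by auto

lemma strict_upper_tri_pow_zero:
  assumes u: "u \<in> strict_upper_tri N"
  shows "i < N \<Longrightarrow> j < N \<Longrightarrow> j < i + k \<Longrightarrow> (u ^\<^sub>m k) $$ (i,j) = 0"
proof (induct k arbitrary: j)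
  case 0
  then show ?case using strict_upper_triD(1)[OF u] by simp
next
  case (Suc k)
  note uc = strict_upper_triD(1)[OF u]
  have "(u ^\<^sub>m Suc k) $$ (i,j) = (\<Sum>l<N. (u ^\<^sub>m k) $$ (i,l) * u $$ (l,j))"
    using Suc.prems by (simp add: index_mult_mat_sum[OF pow_carrier_mat[OF uc] uc])
  also have "\<dots> = 0"
    using Suc strict_upper_triD(2)[OF u, of _ j] by (intro sum.neutral ballI) (case_tac "x < i + k"; simp)
  finally show ?case .
qed

lemma strict_upper_tri_pow_superdiag:
  assumes u: "u \<in> strict_upper_tri N"
  shows "i + k < N \<Longrightarrow> (u ^\<^sub>m k) $$ (i,i+k) = (\<Prod>l<k. u $$ (i+l, Suc (i+l)))"
proof (induct k)
  case 0
  then show ?case using strict_upper_triD(1)[OF u] by simp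
next
  case (Suc k)
  note uc = strict_upper_triD(1)[OF u]
  have "(u ^\<^sub>m Suc k) $$ (i,i + Suc k) = (\<Sum>l<N. (u ^\<^sub>m k) $$ (i,l) * u $$ (l,i + Suc k))"
    using Suc.prems by (simp add: index_mult_mat_sum[OF pow_carrier_mat[OF uc] uc])
  also have "\<dots> = (u ^\<^sub>m k) $$ (i,i+k) * u $$ (i+k,i + Suc k)"
  proof (rule sum_lessThan_single)
    fix l assume l: "l < N" "l \<noteq> i + k"
    then show "(u ^\<^sub>m k) $$ (i,l) * u $$ (l,i + Suc k) = 0"
      using Suc.prems strict_upper_tri_pow_zero[OF u, of i l k] strict_upper_triD(2)[OF u, of l]
      by (cases "l < i + k") auto
  qed (use Suc.prems in simp)
  finally show ?case using Suc by simp
qed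

lemma strict_upper_tri_nilpotent:
  assumes "u \<in> strict_upper_tri N"
  shows "u ^\<^sub>m N = 0\<^sub>m N N"
  using strict_upper_triD(1)[OF assms] strict_upper_tri_pow_zero[OF assms]
  by (intro eq_matI) auto

lemma strict_upper_tri_superdiag_nonzero:
  assumes u: "u \<in> strict_upper_tri (Suc n)" and nz: "u ^\<^sub>m n \<noteq> 0\<^sub>m (Suc n) (Suc n)"
  shows "\<forall>j<n. u $$ (j, Suc j) \<noteq> 0"
proof (intro allI impI notI)
  fix j assume j: "j < n" and z: "u $$ (j, Suc j) = 0"
  have "u ^\<^sub>m n = 0\<^sub>m (Suc n) (Suc n)"
  proof (rule eq_matI)
    fix a b assume ab: "a < dim_row (0\<^sub>m (Suc n) (Suc n))" "b < dim_col (0\<^sub>m (Suc n) (Suc n))"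
    show "(u ^\<^sub>m n) $$ (a,b) = 0\<^sub>m (Suc n) (Suc n) $$ (a,b)"
    proof (cases "b < a + n")
      case True
      then show ?thesis using strict_upper_tri_pow_zero[OF u, of a b n] ab by simp
    next
      case False
      then have "a = 0" "b = 0 + n" using ab by auto
      moreover have "(\<Prod>l<n. u $$ (0+l, Suc (0+l))) = 0"
        using z j by (intro prod_zero) auto
      ultimately show ?thesis using strict_upper_tri_pow_superdiag[OF u, of 0 n] by simp
    qed
  qed (use strict_upper_triD(1)[OF u] in auto)
  with nz show False by simp
qed

lemma strict_upper_tri_kernel:
  assumes u: "u \<in> strict_upper_tri (Suc n)"
    and sd: "\<forall>j<n. u $$ (j, Suc j) \<noteq> 0"
    and kv: "\<And>i. j \<le> i \<Longrightarrow> i < Suc n \<Longrightarrow> (\<Sum>l<Suc n. u $$ (i,l) * v l) = 0"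
  shows "j < i \<Longrightarrow> i < Suc n \<Longrightarrow> v i = 0"
proof (induct "Suc n - i" arbitrary: i rule: less_induct)
  case (less i)
  then obtain i0 where i0: "i = Suc i0" by (cases i) auto
  have "0 = (\<Sum>l<Suc n. u $$ (i0,l) * v l)" using kv[of i0] less i0 by simp
  also have "\<dots> = u $$ (i0, i) * v i"
  proof (rule sum_lessThan_single)
    fix l assume l: "l < Suc n" "l \<noteq> i"
    show "u $$ (i0, l) * v l = 0"
    proof (cases "l < i")
      case True
      then show ?thesis using strict_upper_triD(2)[OF u, of i0 l] l less i0 by simp
    next
      case False
      then show ?thesis using less(1)[of l] l less by simp
    qed
  qed (use less in simp)
  finally show "v i = 0" using sd less i0 by simp
qed

lemma upper_triD:
  assumes "A \<in> upper_tri N"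
  shows "A \<in> carrier_mat N N" "\<And>i j. i < N \<Longrightarrow> j < N \<Longrightarrow> j < i \<Longrightarrow> A $$ (i,j) = 0"
  using assms unfolding upper_tri_def by auto

lemma upper_triI:
  "A \<in> carrier_mat N N \<Longrightarrow> (\<And>i j. i < N \<Longrightarrow> j < N \<Longrightarrow> j < i \<Longrightarrow> A $$ (i,j) = 0) \<Longrightarrow> A \<in> upper_tri N"
  unfolding upper_tri_def by auto

lemma upper_tri_subset: "upper_tri N \<subseteq> carrier_mat N N"
  using upper_triD(1) by blast

lemma upper_tri_mult:
  assumes A: "A \<in> upper_tri N" and B: "B \<in> upper_tri N"
  shows "A * B \<in> upper_tri N"
proof (rule upper_triI)
  note c = upper_triD(1)[OF A] upper_triD(1)[OF B]
  show "A * B \<in> carrier_mat N N" using c by simp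
  fix i j assume ij: "i < N" "j < N" "j < i"
  have "(A * B) $$ (i,j) = (\<Sum>l<N. A $$ (i,l) * B $$ (l,j))"
    using ij by (simp add: index_mult_mat_sum[OF c])
  also have "\<dots> = 0"
    using ij upper_triD(2)[OF A, of i] upper_triD(2)[OF B, of _ j]
    by (intro sum.neutral ballI) (case_tac "x < i"; simp)
  finally show "(A * B) $$ (i,j) = 0" .
qed

lemma upper_tri_pow:
  assumes "A \<in> upper_tri N"
  shows "A ^\<^sub>m k \<in> upper_tri N"
proof (induct k)
  case 0
  have "1\<^sub>m N \<in> upper_tri N" by (rule upper_triI) auto
  then show ?case using upper_triD(1)[OF assms] by simp
qed (simp add: upper_tri_mult assms)

lemma upper_tri_pow_diag:
  assumes A: "A \<in> upper_tri N" and i: "i < N"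
  shows "(A ^\<^sub>m k) $$ (i,i) = A $$ (i,i) ^ k"
proof (induct k)
  case 0
  then show ?case using upper_triD(1)[OF A] i by simp
next
  case (Suc k)
  note Ac = upper_triD(1)[OF A]
  have "(A ^\<^sub>m Suc k) $$ (i,i) = (\<Sum>l<N. (A ^\<^sub>m k) $$ (i,l) * A $$ (l,i))"
    using i by (simp add: index_mult_mat_sum[OF pow_carrier_mat[OF Ac] Ac])
  also have "\<dots> = (A ^\<^sub>m k) $$ (i,i) * A $$ (i,i)"
    using i upper_triD(2)[OF upper_tri_pow[OF A], of i] upper_triD(2)[OF A, of _ i]
    by (intro sum_lessThan_single) (auto simp: nat_neq_iff)
  finally show ?case using Suc by simp
qed

lemma upper_tri_det:
  assumes A: "A \<in> upper_tri N"
  shows "det A = (\<Prod>i = 0..<N. A $$ (i,i))"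
proof -
  note Ac = upper_triD(1)[OF A]
  have "upper_triangular A" unfolding upper_triangular_def using upper_triD(2)[OF A] Ac by auto
  then show ?thesis using det_upper_triangular Ac prod_list_diag_prod by (metis carrier_matD(1))
qed

lemma upper_tri_inverse:
  assumes A: "A \<in> upper_tri N" and AB: "inv_pair N A B"
  shows "B \<in> upper_tri N"
proof -
  note c = inv_pairD[OF AB]
  have dA: "A $$ (i,i) \<noteq> 0" if "i < N" for i
    using upper_tri_det[OF A] inv_pair_det_nonzero[OF AB] that by (auto simp: prod_zero_iff)
  have "B $$ (i,j) = 0" if "j < i" "i < N" for i j
    using that
  proof (induct "N - i" arbitrary: i rule: less_induct)
    case (less i)
    have "0 = (A * B) $$ (i,j)" using c(3) less.prems by simp
    also have "\<dots> = (\<Sum>l<N. A $$ (i,l) * B $$ (l,j))"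
      using less.prems by (simp add: index_mult_mat_sum[OF c(1,2)])
    also have "\<dots> = A $$ (i,i) * B $$ (i,j)"
    proof (rule sum_lessThan_single)
      fix l assume l: "l < N" "l \<noteq> i"
      then show "A $$ (i,l) * B $$ (l,j) = 0"
        using less upper_triD(2)[OF A, of i l] by (cases "l < i") auto
    qed (use less.prems in simp)
    finally show ?case using dA[OF less.prems(2)] by simp
  qed
  then show ?thesis using c(2) by (intro upper_triI) auto
qed

lemma conj_set_upper_tri:
  assumes bb: "inv_pair N b b'" and b: "b \<in> upper_tri N"
  shows "conj_set b b' (upper_tri N) = upper_tri N"
proof
  have b': "b' \<in> upper_tri N" using upper_tri_inverse[OF b bb] .
  note c = inv_pairD[OF bb]
  show "conj_set b b' (upper_tri N) \<subseteq> upper_tri N"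
    unfolding conj_set_def using upper_tri_mult b b' by auto
  show "upper_tri N \<subseteq> conj_set b b' (upper_tri N)"
  proof
    fix A assume A: "A \<in> upper_tri N"
    note Ac = upper_triD(1)[OF A]
    have "b * (b' * A * b) * b' = b * (b' * (A * (b * b')))"
      using c Ac by (simp add: assoc_mult_mat[of _ N N _ N _ N])
    then have "A = b * (b' * A * b) * b'" using c Ac inv_pair_cancel[OF bb] by simp
    moreover have "b' * A * b \<in> upper_tri N" using upper_tri_mult b b' A by simp
    ultimately show "A \<in> conj_set b b' (upper_tri N)" unfolding conj_set_def by blast
  qed
qed

lemma upper_tri_if_intertwines_jordan_block:
  assumes u: "u \<in> strict_upper_tri (Suc n)"
    and sd: "\<forall>j<n. u $$ (j, Suc j) \<noteq> 0"
    and \<beta>: "\<beta> \<in> carrier_mat (Suc n) (Suc n)"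
    and u\<beta>: "u * \<beta> = \<beta> * jordan_block (Suc n) 0"
  shows "\<beta> \<in> upper_tri (Suc n)"
proof -
  let ?J = "jordan_block (Suc n) (0::complex)"
  note uc = strict_upper_triD(1)[OF u]
  have col: "(u * \<beta>) $$ (i,j) = (\<Sum>l<Suc n. u $$ (i,l) * \<beta> $$ (l,j))"
    and col': "(\<beta> * ?J) $$ (i,j) = (\<Sum>l<Suc n. \<beta> $$ (i,l) * ?J $$ (l,j))"
    if "i < Suc n" "j < Suc n" for i j
    using that index_mult_mat_sum[OF uc \<beta>] index_mult_mat_sum[OF \<beta> jordan_block_carrier] by blast+
  have "\<forall>i. j < i \<and> i < Suc n \<longrightarrow> \<beta> $$ (i,j) = 0" if "j < Suc n" for j
    using that
  proof (induct j)
    case 0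
    have kv: "(\<Sum>l<Suc n. u $$ (i,l) * \<beta> $$ (l,0)) = 0" if "0 \<le> i" "i < Suc n" for i
    proof -
      have "(\<Sum>l<Suc n. u $$ (i,l) * \<beta> $$ (l,0)) = (u * \<beta>) $$ (i,0)"
        by (rule col[OF that(2) zero_less_Suc, symmetric])
      also have "\<dots> = (\<Sum>l<Suc n. \<beta> $$ (i,l) * ?J $$ (l,0))"
        unfolding u\<beta> by (rule col'[OF that(2) zero_less_Suc])
      also have "\<dots> = 0" by (intro sum.neutral) auto
      finally show ?thesis .
    qed
    show ?case using strict_upper_tri_kernel[OF u sd kv] by auto
  next
    case (Suc j)
    have kv: "(\<Sum>l<Suc n. u $$ (i,l) * \<beta> $$ (l,Suc j)) = 0" if "Suc j \<le> i" "i < Suc n" for i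
    proof -
      have "(\<Sum>l<Suc n. u $$ (i,l) * \<beta> $$ (l,Suc j)) = (u * \<beta>) $$ (i,Suc j)"
        by (rule col[OF that(2) Suc.prems, symmetric])
      also have "\<dots> = (\<Sum>l<Suc n. \<beta> $$ (i,l) * ?J $$ (l,Suc j))"
        unfolding u\<beta> by (rule col'[OF that(2) Suc.prems])
      also have "\<dots> = \<beta> $$ (i,j) * ?J $$ (j, Suc j)"
        using Suc.prems by (intro sum_lessThan_single) auto
      also have "\<dots> = 0" using Suc that by simp
      finally show ?thesis .
    qed
    show ?case using strict_upper_tri_kernel[OF u sd kv] by auto
  qed
  then show ?thesis using \<beta> by (intro upper_triI) auto
qed

text \<open>The conjugate of the regular nilpotent Jordan block by a normalizing \<open>\<beta>\<close> is again a
  regular nilpotent element of the Borel subalgebra, and \<open>\<beta>\<close> intertwines the two.\<close>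

lemma upper_tri_normalizer:
  assumes \<beta>\<gamma>: "inv_pair (Suc n) \<beta> \<gamma>"
    and stab: "\<And>z. z \<in> upper_tri (Suc n) \<Longrightarrow> \<beta> * z * \<gamma> \<in> upper_tri (Suc n)"
  shows "\<beta> \<in> upper_tri (Suc n)"
proof -
  let ?N = "Suc n"
  let ?J = "jordan_block ?N (0::complex)"
  note c = inv_pairD[OF \<beta>\<gamma>]
  have Jc: "?J \<in> carrier_mat ?N ?N" by simp
  define u where "u = \<beta> * ?J * \<gamma>"
  have uB: "u \<in> upper_tri ?N" unfolding u_def by (rule stab, rule upper_triI) auto
  note uc = upper_triD(1)[OF uB]
  have upow: "u ^\<^sub>m k = \<beta> * ?J ^\<^sub>m k * \<gamma>" for k
    unfolding u_def by (rule pow_mat_conj[OF \<beta>\<gamma> Jc])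
  have "?J ^\<^sub>m ?N = 0\<^sub>m ?N ?N" unfolding jordan_block_zero_pow by (rule eq_matI) auto
  then have uN: "u ^\<^sub>m ?N = 0\<^sub>m ?N ?N" unfolding upow using c by simp
  have u: "u \<in> strict_upper_tri ?N"
    unfolding strict_upper_tri_def
  proof (intro CollectI conjI uc allI impI)
    fix i j assume ij: "i < ?N" "j < ?N" "j \<le> i"
    show "u $$ (i,j) = 0"
    proof (cases "j < i")
      case True
      then show ?thesis using upper_triD(2)[OF uB] ij by simp
    next
      case False
      then have "u $$ (i,i) ^ ?N = 0" "j = i"
        using upper_tri_pow_diag[OF uB ij(1), of ?N] uN ij by auto
      then show ?thesis by auto
    qed
  qed
  have "u ^\<^sub>m n \<noteq> 0\<^sub>m ?N ?N"
  proof
    assume z: "u ^\<^sub>m n = 0\<^sub>m ?N ?N"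
    have "?J ^\<^sub>m n = \<gamma> * (\<beta> * (?J ^\<^sub>m n * (\<gamma> * \<beta>)))"
      using inv_pair_cancel(2)[OF \<beta>\<gamma> pow_carrier_mat[OF Jc, of n]] c by simp
    also have "\<dots> = \<gamma> * (\<beta> * ?J ^\<^sub>m n * \<gamma>) * \<beta>"
      using c(1,2) Jc by (simp add: assoc_mult_mat[of _ ?N ?N _ ?N _ ?N])
    also have "\<dots> = 0\<^sub>m ?N ?N" using z[unfolded upow] c by simp
    finally have "(?J ^\<^sub>m n) $$ (0,n) = 0" by simp
    then show False unfolding jordan_block_zero_pow by simp
  qed
  then have sd: "\<forall>j<n. u $$ (j, Suc j) \<noteq> 0"
    by (rule strict_upper_tri_superdiag_nonzero[OF u])
  have "u * \<beta> = \<beta> * (?J * (\<gamma> * \<beta>))"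
    unfolding u_def using c Jc by (simp add: assoc_mult_mat[of _ ?N ?N _ ?N _ ?N])
  then have "u * \<beta> = \<beta> * ?J" using c Jc by simp
  then show ?thesis using upper_tri_if_intertwines_jordan_block[OF u sd c(1)] by simp
qed

lemma conj_set_upper_tri_eqD:
  assumes ss: "inv_pair (Suc n) s s'" and mm: "inv_pair (Suc n) m m'"
    and eq: "conj_set s s' (upper_tri (Suc n)) = conj_set m m' (upper_tri (Suc n))"
  shows "m' * s \<in> upper_tri (Suc n)"
proof (rule upper_tri_normalizer)
  let ?N = "Suc n"
  note c = inv_pairD[OF ss] inv_pairD[OF mm]
  show "inv_pair ?N (m' * s) (s' * m)" by (rule inv_pair_mult[OF inv_pair_sym[OF mm] ss])
  fix z assume z: "z \<in> upper_tri ?N"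
  note zc = upper_triD(1)[OF z]
  have "s * z * s' \<in> conj_set m m' (upper_tri ?N)"
    using eq z unfolding conj_set_def by blast
  then obtain z' where z': "z' \<in> upper_tri ?N" "s * z * s' = m * z' * m'"
    unfolding conj_set_def by auto
  note z'c = upper_triD(1)[OF z'(1)]
  have "m' * s * z * (s' * m) = m' * (s * z * s') * m"
    using c zc by (simp add: assoc_mult_mat[of _ ?N ?N _ ?N _ ?N])
  also have "\<dots> = m' * (m * (z' * (m' * m)))"
    unfolding z'(2) using c z'c by (simp add: assoc_mult_mat[of _ ?N ?N _ ?N _ ?N])
  also have "\<dots> = z'" using inv_pair_cancel[OF mm] c z'c by simp
  finally show "m' * s * z * (s' * m) \<in> upper_tri ?N" using z'(1) by simp
qed

section \<open>Nilpotent elements with nilpotent block diagonal part\<close>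

lemma last_nonzero_index:
  fixes f :: "nat \<Rightarrow> 'a::zero"
  assumes "f i \<noteq> 0" and "\<And>k. k \<ge> K \<Longrightarrow> f k = 0"
  obtains m where "f m \<noteq> 0" "\<And>k. m < k \<Longrightarrow> f k = 0"
proof -
  let ?S = "{k. f k \<noteq> 0}"
  have "?S \<subseteq> {..<K}" using assms(2) not_less by blast
  then have fin: "finite ?S" by (rule finite_subset) simp
  show ?thesis
  proof
    show "f (Max ?S) \<noteq> 0" using Max_in[OF fin] assms(1) by blast
    show "f k = 0" if "Max ?S < k" for k
    proof (rule ccontr)
      assume "f k \<noteq> 0"
      then have "k \<le> Max ?S" using Max_ge[OF fin] by simp
      with that show False by simp
    qed
  qed
qed

text \<open>If \<open>s \<noteq> 0\<close>, the product of the last nonzero terms of \<open>a\<close> and \<open>s\<close> would be the only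
  contribution to a later term of \<open>a\<close>.\<close>

lemma convolution_recurrence_vanishes:
  fixes a s :: "nat \<Rightarrow> complex"
  assumes a0: "a 0 = 1" and rec: "\<And>m. a (Suc m) = (\<Sum>j<m. a j * s (m - 1 - j))"
    and az: "\<And>m. m \<ge> K \<Longrightarrow> a m = 0" and sz: "\<And>k. k \<ge> K \<Longrightarrow> s k = 0"
    and m: "m \<ge> 1"
  shows "a m = 0"
proof -
  have "s k = 0" for k
  proof (rule ccontr)
    assume "s k \<noteq> 0"
    then obtain k0 where sk0: "s k0 \<noteq> 0" "\<And>k. k0 < k \<Longrightarrow> s k = 0"
      using last_nonzero_index[of s k K] sz by blast
    obtain m0 where am0: "a m0 \<noteq> 0" "\<And>m. m0 < m \<Longrightarrow> a m = 0"
      using last_nonzero_index[of a 0 K] a0 az by auto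
    have "a (Suc (m0 + k0 + 1)) = (\<Sum>j<m0 + k0 + 1. a j * s (m0 + k0 + 1 - 1 - j))" by (rule rec)
    also have "\<dots> = a m0 * s (m0 + k0 + 1 - 1 - m0)"
    proof (rule sum_lessThan_single)
      fix j assume "j < m0 + k0 + 1" "j \<noteq> m0"
      then show "a j * s (m0 + k0 + 1 - 1 - j) = 0"
        using sk0(2)[of "m0 + k0 + 1 - 1 - j"] am0(2)[of j] by (cases "j < m0") auto
    qed simp
    finally have "a (Suc (m0 + k0 + 1)) \<noteq> 0" using am0 sk0 by simp
    with am0(2) show False by simp
  qed
  moreover obtain m' where "m = Suc m'" using m by (cases m) auto
  ultimately show "a m = 0" using rec by simp
qed

lemma proj_k_entry:
  "i \<le> n \<Longrightarrow> j \<le> n \<Longrightarrow> proj_k n x $$ (i,j) = (if (i < n) = (j < n) then x $$ (i,j) else 0)"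
  unfolding proj_k_def by simp

lemma proj_k_carrier: "proj_k n x \<in> carrier_mat (Suc n) (Suc n)"
  unfolding proj_k_def by simp

lemma proj_k_pow_last:
  shows "i < n \<Longrightarrow> (proj_k n x ^\<^sub>m k) $$ (i,n) = 0" "i < n \<Longrightarrow> (proj_k n x ^\<^sub>m k) $$ (n,i) = 0"
    "(proj_k n x ^\<^sub>m k) $$ (n,n) = x $$ (n,n) ^ k"
proof -
  let ?P = "proj_k n x"
  have "(\<forall>i<n. (?P ^\<^sub>m k) $$ (i,n) = 0 \<and> (?P ^\<^sub>m k) $$ (n,i) = 0) \<and> (?P ^\<^sub>m k) $$ (n,n) = x $$ (n,n) ^ k"
  proof (induct k)
    case (Suc k)
    have "(?P ^\<^sub>m Suc k) $$ (i,j) = (\<Sum>l<n. (?P ^\<^sub>m k) $$ (i,l) * ?P $$ (l,j)) + (?P ^\<^sub>m k) $$ (i,n) * ?P $$ (n,j)"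
      if "i \<le> n" "j \<le> n" for i j
      using that by (simp add: index_mult_mat_sum[OF pow_carrier_mat[OF proj_k_carrier] proj_k_carrier])
    then show ?case using Suc by (simp add: proj_k_entry)
  qed (simp add: proj_k_def)
  then show "i < n \<Longrightarrow> (?P ^\<^sub>m k) $$ (i,n) = 0" "i < n \<Longrightarrow> (?P ^\<^sub>m k) $$ (n,i) = 0"
    "(?P ^\<^sub>m k) $$ (n,n) = x $$ (n,n) ^ k"
    by auto
qed

lemma proj_k_pow_Suc_upper_block:
  assumes "i < n" "j < n"
  shows "(proj_k n x ^\<^sub>m Suc k) $$ (i,j) = (\<Sum>l<n. x $$ (i,l) * (proj_k n x ^\<^sub>m k) $$ (l,j))"
proof -
  let ?P = "proj_k n x"
  have "(?P ^\<^sub>m Suc k) $$ (i,j) = (?P * ?P ^\<^sub>m k) $$ (i,j)"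
    using pow_mat_Suc_left[OF proj_k_carrier] by simp
  also have "\<dots> = (\<Sum>l<n. ?P $$ (i,l) * (?P ^\<^sub>m k) $$ (l,j)) + ?P $$ (i,n) * (?P ^\<^sub>m k) $$ (n,j)"
    using assms by (simp add: index_mult_mat_sum[OF proj_k_carrier pow_carrier_mat[OF proj_k_carrier]])
  finally show ?thesis using assms by (simp add: proj_k_entry)
qed

text \<open>A walk from \<open>i < n\<close> to \<open>n\<close> of length \<open>m\<close> for \<open>x\<close> is split at its last visit to \<open>n\<close>
  before the end: the final segment stays in the upper left block apart from its last step.\<close>

lemma pow_last_column_expansion:
  assumes x: "x \<in> carrier_mat (Suc n) (Suc n)" and i: "i < n"
  shows "(x ^\<^sub>m m) $$ (i,n) =
    (\<Sum>j<m. (x ^\<^sub>m j) $$ (n,n) * (\<Sum>l<n. (proj_k n x ^\<^sub>m (m - 1 - j)) $$ (i,l) * x $$ (l,n)))"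
  using i
proof (induct m arbitrary: i)
  case 0
  then show ?case using x by simp
next
  case (Suc m)
  let ?P = "proj_k n x"
  define c where "c k i = (\<Sum>l<n. (?P ^\<^sub>m k) $$ (i,l) * x $$ (l,n))" for k i
  have c0: "c 0 i = x $$ (i,n)"
  proof -
    have "c 0 i = (\<Sum>l<n. (if i = l then 1 else 0) * x $$ (l,n))"
      unfolding c_def using Suc.prems proj_k_carrier[of n x] by (intro sum.cong) auto
    also have "\<dots> = x $$ (i,n)" using Suc.prems by (subst sum_lessThan_single[of i]) auto
    finally show ?thesis .
  qed
  have cS: "c (Suc k) i = (\<Sum>l<n. x $$ (i,l) * c k l)" for k
  proof -
    have "c (Suc k) i = (\<Sum>l'<n. (\<Sum>l<n. x $$ (i,l) * (?P ^\<^sub>m k) $$ (l,l')) * x $$ (l',n))"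
      unfolding c_def using Suc.prems
      by (intro sum.cong refl) (simp add: proj_k_pow_Suc_upper_block del: pow_mat.simps(2))
    also have "\<dots> = (\<Sum>l'<n. \<Sum>l<n. x $$ (i,l) * ((?P ^\<^sub>m k) $$ (l,l') * x $$ (l',n)))"
      by (simp add: sum_distrib_right mult.assoc)
    also have "\<dots> = (\<Sum>l<n. \<Sum>l'<n. x $$ (i,l) * ((?P ^\<^sub>m k) $$ (l,l') * x $$ (l',n)))"
      by (rule sum.swap)
    finally show ?thesis unfolding c_def by (simp add: sum_distrib_left)
  qed
  have "(x ^\<^sub>m Suc m) $$ (i,n) = (x * x ^\<^sub>m m) $$ (i,n)" using pow_mat_Suc_left[OF x] by simp
  also have "\<dots> = (\<Sum>l<n. x $$ (i,l) * (x ^\<^sub>m m) $$ (l,n)) + x $$ (i,n) * (x ^\<^sub>m m) $$ (n,n)"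
    using Suc.prems by (simp add: index_mult_mat_sum[OF x pow_carrier_mat[OF x]])
  also have "(\<Sum>l<n. x $$ (i,l) * (x ^\<^sub>m m) $$ (l,n)) =
      (\<Sum>l<n. \<Sum>j<m. (x ^\<^sub>m j) $$ (n,n) * (x $$ (i,l) * c (m - 1 - j) l))"
    using Suc.hyps unfolding c_def by (simp add: sum_distrib_left mult.left_commute)
  also have "\<dots> = (\<Sum>j<m. \<Sum>l<n. (x ^\<^sub>m j) $$ (n,n) * (x $$ (i,l) * c (m - 1 - j) l))"
    by (rule sum.swap)
  also have "\<dots> = (\<Sum>j<m. (x ^\<^sub>m j) $$ (n,n) * c (Suc (m - 1 - j)) i)"
    by (intro sum.cong refl) (simp add: cS sum_distrib_left)
  also have "\<dots> = (\<Sum>j<m. (x ^\<^sub>m j) $$ (n,n) * c (Suc m - 1 - j) i)"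
    by (intro sum.cong) (auto simp: Suc_diff_Suc)
  finally show ?case using c0 unfolding c_def by (simp add: mult.commute)
qed

lemma pow_last_diag_vanishes:
  assumes x: "x \<in> carrier_mat (Suc n) (Suc n)"
    and xn: "x ^\<^sub>m K1 = 0\<^sub>m (Suc n) (Suc n)"
    and pn: "proj_k n x ^\<^sub>m K2 = 0\<^sub>m (Suc n) (Suc n)"
    and m: "m \<ge> 1"
  shows "(x ^\<^sub>m m) $$ (n,n) = 0"
proof -
  let ?P = "proj_k n x"
  define a where "a m = (x ^\<^sub>m m) $$ (n,n)" for m
  define s where "s k = (\<Sum>l<n. x $$ (n,l) * (\<Sum>l'<n. (?P ^\<^sub>m k) $$ (l,l') * x $$ (l',n)))" for k
  have "x $$ (n,n) ^ K2 = 0" using proj_k_pow_last(3)[of n x K2] pn by simp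
  then have d0: "x $$ (n,n) = 0" by simp
  have "a (Suc m) = (\<Sum>j<m. a j * s (m - 1 - j))" for m
  proof -
    have "a (Suc m) = (x * x ^\<^sub>m m) $$ (n,n)" unfolding a_def using pow_mat_Suc_left[OF x] by simp
    also have "\<dots> = (\<Sum>l<n. x $$ (n,l) * (x ^\<^sub>m m) $$ (l,n))"
      using d0 by (simp add: index_mult_mat_sum[OF x pow_carrier_mat[OF x]])
    also have "\<dots> = (\<Sum>l<n. \<Sum>j<m. a j * (x $$ (n,l) *
        (\<Sum>l'<n. (?P ^\<^sub>m (m - 1 - j)) $$ (l,l') * x $$ (l',n))))"
      unfolding a_def by (simp add: pow_last_column_expansion[OF x] sum_distrib_left mult.left_commute)
    also have "\<dots> = (\<Sum>j<m. a j * s (m - 1 - j))"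
      unfolding s_def by (subst sum.swap) (simp add: sum_distrib_left)
    finally show ?thesis .
  qed
  moreover have "a k = 0" "s k = 0" if "k \<ge> max K1 K2" for k
    using pow_mat_zero_mono[OF x xn] pow_mat_zero_mono[OF proj_k_carrier pn] that
    unfolding a_def s_def by auto
  ultimately show ?thesis
    using convolution_recurrence_vanishes[of a s "max K1 K2" m] m x unfolding a_def by simp
qed

section \<open>The pivot condition\<close>

definition pivot_type :: "nat \<Rightarrow> nat \<Rightarrow> complex mat \<Rightarrow> complex mat \<Rightarrow> bool" where
  "pivot_type n p g h \<longleftrightarrow>
     p \<le> n \<and> (\<forall>j<p. g $$ (n,j) = 0) \<and> (\<forall>j. p < j \<and> j \<le> n \<longrightarrow> h $$ (j,n) = 0)"

lemma strict_upper_tri_pow_mult_vec: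
  assumes u: "u \<in> strict_upper_tri (Suc n)"
    and sd: "\<forall>j<n. u $$ (j, Suc j) \<noteq> 0"
    and p: "p \<le> n" and Ep: "E p \<noteq> 0" and Ez: "\<And>j. p < j \<Longrightarrow> j < Suc n \<Longrightarrow> E j = 0"
    and m: "m \<le> p"
  shows "\<And>i. i < Suc n \<Longrightarrow> p < i + m \<Longrightarrow> (\<Sum>j<Suc n. (u ^\<^sub>m m) $$ (i,j) * E j) = 0"
    and "(\<Sum>j<Suc n. (u ^\<^sub>m m) $$ (p - m, j) * E j) \<noteq> 0"
proof -
  show "(\<Sum>j<Suc n. (u ^\<^sub>m m) $$ (i,j) * E j) = 0" if "i < Suc n" "p < i + m" for i
    using that strict_upper_tri_pow_zero[OF u, of i _ m] Ez
    by (intro sum.neutral ballI) (case_tac "x < i + m"; simp)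
  have "(\<Sum>j<Suc n. (u ^\<^sub>m m) $$ (p - m, j) * E j) = (u ^\<^sub>m m) $$ (p - m, p) * E p"
  proof (rule sum_lessThan_single)
    fix j assume "j < Suc n" "j \<noteq> p"
    then show "(u ^\<^sub>m m) $$ (p - m, j) * E j = 0"
      using strict_upper_tri_pow_zero[OF u, of "p - m" j m] Ez[of j] m p by (cases "j < p") auto
  qed (use p in simp)
  moreover have "(u ^\<^sub>m m) $$ (p - m, p) = (\<Prod>l<m. u $$ (p - m + l, Suc (p - m + l)))"
    using strict_upper_tri_pow_superdiag[OF u, of "p - m" m] m p by simp
  moreover have "(\<Prod>l<m. u $$ (p - m + l, Suc (p - m + l))) \<noteq> 0"
    using sd m p by (subst prod_zero_iff) auto
  ultimately show "(\<Sum>j<Suc n. (u ^\<^sub>m m) $$ (p - m, j) * E j) \<noteq> 0" using Ep by simp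
qed

text \<open>\<open>E\<close> and \<open>F\<close> play the roles of the last column of \<open>g\<^sup>-\<^sup>1\<close> and the last row of \<open>g\<close>.
  With \<open>p\<close> the last nonzero position of \<open>E\<close>, the conditions for \<open>m = p, p - 1, \<dots>, 1\<close> kill
  \<open>F\<^sub>0, F\<^sub>1, \<dots>, F\<^sub>p\<^sub>-\<^sub>1\<close> one at a time.\<close>

lemma pivot_if_pow_bilinear_vanishes:
  assumes u: "u \<in> strict_upper_tri (Suc n)"
    and sd: "\<forall>j<n. u $$ (j, Suc j) \<noteq> 0"
    and FE: "(\<Sum>i<Suc n. F i * E i) \<noteq> (0::complex)"
    and van: "\<And>m. m \<ge> 1 \<Longrightarrow> (\<Sum>i<Suc n. F i * (\<Sum>j<Suc n. (u ^\<^sub>m m) $$ (i,j) * E j)) = 0"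
  shows "\<exists>p\<le>n. (\<forall>j<p. F j = 0) \<and> (\<forall>j. p < j \<and> j < Suc n \<longrightarrow> E j = 0)"
proof -
  define E' where "E' j = (if j < Suc n then E j else 0)" for j
  obtain i where "i < Suc n" "E i \<noteq> 0" using FE by (metis (no_types, lifting) lessThan_iff mult_zero_right sum.neutral)
  then obtain p where Ep: "E' p \<noteq> 0" and Ez: "\<And>j. p < j \<Longrightarrow> E' j = 0"
    using last_nonzero_index[of E' i "Suc n"] unfolding E'_def by auto
  have pn: "p \<le> n" using Ep unfolding E'_def by (simp split: if_splits)
  have Ez': "E j = 0" if "p < j" "j < Suc n" for j using Ez[of j] that unfolding E'_def by simp
  have Ep': "E p \<noteq> 0" using Ep pn unfolding E'_def by simp
  have v1: "(\<Sum>j<Suc n. (u ^\<^sub>m m) $$ (i,j) * E j) = 0" if "m \<le> p" "i < Suc n" "p < i + m" for m i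
    by (rule strict_upper_tri_pow_mult_vec(1)[of u n p E, OF u sd pn Ep' Ez' that])
  have v2: "(\<Sum>j<Suc n. (u ^\<^sub>m m) $$ (p - m, j) * E j) \<noteq> 0" if "m \<le> p" for m
    by (rule strict_upper_tri_pow_mult_vec(2)[of u n p E, OF u sd pn Ep' Ez' that])
  have "F k = 0" if "k < p" for k
    using that
  proof (induct k rule: less_induct)
    case (less k)
    define m where "m = p - k"
    have m: "m \<ge> 1" "m \<le> p" "k = p - m" using less.prems unfolding m_def by auto
    have "0 = (\<Sum>i<Suc n. F i * (\<Sum>j<Suc n. (u ^\<^sub>m m) $$ (i,j) * E j))" using van[OF m(1)] by simp
    also have "\<dots> = F k * (\<Sum>j<Suc n. (u ^\<^sub>m m) $$ (k,j) * E j)"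
    proof (rule sum_lessThan_single)
      fix i assume i: "i < Suc n" "i \<noteq> k"
      show "F i * (\<Sum>j<Suc n. (u ^\<^sub>m m) $$ (i,j) * E j) = 0"
      proof (cases "i < k")
        case True
        then show ?thesis using less by simp
      next
        case False
        then show ?thesis using v1[OF m(2) i(1)] i less.prems pn unfolding m_def by simp
      qed
    qed (use less.prems pn in simp)
    finally show "F k = 0" using v2[OF m(2)] m(3) pn by simp
  qed
  then show ?thesis using pn Ez' by blast
qed

lemma pivot_type_if_proj_k_nilpotent:
  assumes gh: "inv_pair (Suc n) g h" and u: "u \<in> strict_upper_tri (Suc n)"
    and nz: "(g * u * h) ^\<^sub>m n \<noteq> 0\<^sub>m (Suc n) (Suc n)"
    and nil: "nilpotent_mat (Suc n) (proj_k n (g * u * h))"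
  shows "\<exists>p. pivot_type n p g h"
proof -
  let ?N = "Suc n"
  note c = inv_pairD[OF gh]
  note uc = strict_upper_triD(1)[OF u]
  define x where "x = g * u * h"
  have xc: "x \<in> carrier_mat ?N ?N" unfolding x_def using c uc by simp
  have xpow: "x ^\<^sub>m m = g * u ^\<^sub>m m * h" for m
    unfolding x_def by (rule pow_mat_conj[OF gh uc])
  have "u ^\<^sub>m n \<noteq> 0\<^sub>m ?N ?N" using nz c(1,2) by (auto simp: pow_mat_conj[OF gh uc])
  then have sd: "\<forall>j<n. u $$ (j, Suc j) \<noteq> 0"
    by (rule strict_upper_tri_superdiag_nonzero[OF u])
  have xn: "x ^\<^sub>m ?N = 0\<^sub>m ?N ?N"
    unfolding xpow strict_upper_tri_nilpotent[OF u] using c by simp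
  from nil obtain K where K: "proj_k n x ^\<^sub>m K = 0\<^sub>m ?N ?N"
    unfolding nilpotent_mat_def x_def by auto
  have "(\<Sum>i<?N. g $$ (n,i) * (\<Sum>j<?N. (u ^\<^sub>m m) $$ (i,j) * h $$ (j,n))) = 0" if "m \<ge> 1" for m
    using pow_last_diag_vanishes[OF xc xn K that] index_conj_mat_sum[OF c(1) pow_carrier_mat[OF uc] c(2)]
    by (simp add: xpow)
  moreover have "(\<Sum>i<?N. g $$ (n,i) * h $$ (i,n)) \<noteq> 0"
    using index_mult_mat_sum[OF c(1,2), of n n] c(3) by simp
  ultimately obtain p where "p \<le> n" "\<forall>j<p. g $$ (n,j) = 0" "\<forall>j. p < j \<and> j < ?N \<longrightarrow> h $$ (j,n) = 0"
    using pivot_if_pow_bilinear_vanishes[OF u sd, of "\<lambda>i. g $$ (n,i)" "\<lambda>i. h $$ (i,n)"] by blast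
  then show ?thesis unfolding pivot_type_def by auto
qed

section \<open>Borel subalgebras of pivot type form a closed \<open>K\<close>-orbit\<close>

lemma tendsto_det:
  assumes A: "\<And>k. A k \<in> carrier_mat M M" and A0: "A0 \<in> carrier_mat M M"
    and conv: "\<And>i j. i < M \<Longrightarrow> j < M \<Longrightarrow> (\<lambda>k. A k $$ (i,j)) \<longlonglongrightarrow> A0 $$ (i,j)"
  shows "(\<lambda>k. det (A k)) \<longlonglongrightarrow> (det A0 :: complex)"
proof -
  have "(\<lambda>k. \<Sum>p | p permutes {0..<M}. signof p * (\<Prod>i = 0..<M. A k $$ (i, p i))) \<longlonglongrightarrow>
        (\<Sum>p | p permutes {0..<M}. signof p * (\<Prod>i = 0..<M. A0 $$ (i, p i)))"
    using conv permutes_in_image by (intro tendsto_sum tendsto_mult tendsto_const tendsto_prod) fastforce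
  then show ?thesis using det_def'[OF A] det_def'[OF A0] by simp
qed

lemma tendsto_adj_mat_entry:
  assumes A: "\<And>k. A k \<in> carrier_mat M M" and A0: "A0 \<in> carrier_mat M M"
    and conv: "\<And>i j. i < M \<Longrightarrow> j < M \<Longrightarrow> (\<lambda>k. A k $$ (i,j)) \<longlonglongrightarrow> A0 $$ (i,j)"
    and ij: "i < M" "j < M"
  shows "(\<lambda>k. adj_mat (A k) $$ (i,j)) \<longlonglongrightarrow> (adj_mat A0 $$ (i,j) :: complex)"
proof -
  have adj: "adj_mat B $$ (i,j) = (-1)^(j+i) * det (mat_delete B j i)" if "B \<in> carrier_mat M M" for B
    using that ij unfolding adj_mat_def cofactor_def by simp
  have "(\<lambda>k. det (mat_delete (A k) j i)) \<longlonglongrightarrow> det (mat_delete A0 j i)"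
  proof (rule tendsto_det[of _ "M - 1"])
    show "\<And>k. mat_delete (A k) j i \<in> carrier_mat (M - 1) (M - 1)" "mat_delete A0 j i \<in> carrier_mat (M - 1) (M - 1)"
      using mat_delete_carrier A A0 by blast+
    fix a b assume ab: "a < M - 1" "b < M - 1"
    have "dim_row (A k) = M" "dim_col (A k) = M" for k using A by auto
    then show "(\<lambda>k. mat_delete (A k) j i $$ (a,b)) \<longlonglongrightarrow> mat_delete A0 j i $$ (a,b)"
      using ab A0 conv[of "if a < j then a else Suc a" "if b < i then b else Suc b"]
      unfolding mat_delete_def by auto
  qed
  then show ?thesis unfolding adj[OF A] adj[OF A0] by (intro tendsto_intros)
qed

lemma tendsto_inv_pair_entry:
  assumes ss: "\<And>k. inv_pair N (s k) (s' k)" and gh: "inv_pair N g h"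
    and conv: "mat_converges N s g" and ij: "i < N" "j < N"
  shows "(\<lambda>k. s' k $$ (i,j)) \<longlonglongrightarrow> h $$ (i,j)"
proof -
  note sc = inv_pairD(1)[OF ss] and gc = inv_pairD(1)[OF gh]
  have cv: "\<And>i j. i < N \<Longrightarrow> j < N \<Longrightarrow> (\<lambda>k. s k $$ (i,j)) \<longlonglongrightarrow> g $$ (i,j)"
    using conv unfolding mat_converges_def by blast
  have "(\<lambda>k. adj_mat (s k) $$ (i,j) / det (s k)) \<longlonglongrightarrow> adj_mat g $$ (i,j) / det g"
    using tendsto_adj_mat_entry[OF sc gc cv ij] tendsto_det[OF sc gc cv] inv_pair_det_nonzero[OF gh]
    by (rule tendsto_divide)
  then show ?thesis using inv_pair_entry[OF ss ij] inv_pair_entry[OF gh ij] by simp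
qed

lemma pivot_type_limit:
  assumes st: "\<And>k. inv_pair (Suc n) (s k) (s' k) \<and> pivot_type n p (s k) (s' k)"
    and gh: "inv_pair (Suc n) g h" and conv: "mat_converges (Suc n) s g"
  shows "pivot_type n p g h"
proof -
  have pn: "p \<le> n" using st[of 0] unfolding pivot_type_def by blast
  have "g $$ (n,j) = 0" if "j < p" for j
  proof -
    have "(\<lambda>k. s k $$ (n,j)) \<longlonglongrightarrow> g $$ (n,j)" using conv that pn unfolding mat_converges_def by simp
    moreover have "(\<lambda>k. s k $$ (n,j)) = (\<lambda>k. 0)" using st that unfolding pivot_type_def by auto
    ultimately show ?thesis using LIMSEQ_unique tendsto_const by metis
  qed
  moreover have "h $$ (j,n) = 0" if "p < j" "j \<le> n" for j
  proof -
    have "(\<lambda>k. s' k $$ (j,n)) \<longlonglongrightarrow> h $$ (j,n)"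
      using st gh conv that by (intro tendsto_inv_pair_entry) auto
    moreover have "(\<lambda>k. s' k $$ (j,n)) = (\<lambda>k. 0)" using st that unfolding pivot_type_def by auto
    ultimately show ?thesis using LIMSEQ_unique tendsto_const by metis
  qed
  ultimately show ?thesis unfolding pivot_type_def using pn by blast
qed

lemma pivot_type_mult_block_diag:
  assumes t: "pivot_type n p g h"
    and k: "block_diag n k" "k \<in> carrier_mat (Suc n) (Suc n)"
    and k': "block_diag n k'" "k' \<in> carrier_mat (Suc n) (Suc n)"
    and g: "g \<in> carrier_mat (Suc n) (Suc n)" and h: "h \<in> carrier_mat (Suc n) (Suc n)"
  shows "pivot_type n p (k * g) (h * k')"
proof -
  have pn: "p \<le> n" using t unfolding pivot_type_def by auto
  have "(k * g) $$ (n,j) = k $$ (n,n) * g $$ (n,j)" if "j < p" for j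
  proof -
    have "(k * g) $$ (n,j) = (\<Sum>l<Suc n. k $$ (n,l) * g $$ (l,j))"
      using that pn by (intro index_mult_mat_sum[OF k(2) g]) auto
    also have "\<dots> = k $$ (n,n) * g $$ (n,j)"
      using k(1) by (intro sum_lessThan_single) (auto simp: block_diag_def)
    finally show ?thesis .
  qed
  moreover have "(h * k') $$ (j,n) = h $$ (j,n) * k' $$ (n,n)" if "j \<le> n" for j
  proof -
    have "(h * k') $$ (j,n) = (\<Sum>l<Suc n. h $$ (j,l) * k' $$ (l,n))"
      using that by (intro index_mult_mat_sum[OF h k'(2)]) auto
    also have "\<dots> = h $$ (j,n) * k' $$ (n,n)"
      using k'(1) by (intro sum_lessThan_single) (auto simp: block_diag_def)
    finally show ?thesis .
  qed
  ultimately show ?thesis using t unfolding pivot_type_def by auto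
qed

lemma pivot_type_mult_upper_tri:
  assumes t: "pivot_type n p g h" and b: "b \<in> upper_tri (Suc n)" and b': "b' \<in> upper_tri (Suc n)"
    and g: "g \<in> carrier_mat (Suc n) (Suc n)" and h: "h \<in> carrier_mat (Suc n) (Suc n)"
  shows "pivot_type n p (g * b) (b' * h)"
proof -
  have pn: "p \<le> n" and tg: "\<forall>j<p. g $$ (n,j) = 0" and th: "\<forall>j. p < j \<and> j \<le> n \<longrightarrow> h $$ (j,n) = 0"
    using t unfolding pivot_type_def by auto
  have "(g * b) $$ (n,j) = 0" if "j < p" for j
  proof -
    have "(g * b) $$ (n,j) = (\<Sum>l<Suc n. g $$ (n,l) * b $$ (l,j))"
      using that pn by (intro index_mult_mat_sum[OF g upper_triD(1)[OF b]]) auto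
    also have "\<dots> = 0"
      using that pn tg upper_triD(2)[OF b, of _ j] by (intro sum.neutral ballI) (case_tac "j < x"; auto)
    finally show ?thesis .
  qed
  moreover have "(b' * h) $$ (j,n) = 0" if "p < j" "j \<le> n" for j
  proof -
    have "(b' * h) $$ (j,n) = (\<Sum>l<Suc n. b' $$ (j,l) * h $$ (l,n))"
      using that by (intro index_mult_mat_sum[OF upper_triD(1)[OF b'] h]) auto
    also have "\<dots> = 0"
      using that th upper_triD(2)[OF b', of j] by (intro sum.neutral ballI) (case_tac "x < j"; auto)
    finally show ?thesis .
  qed
  ultimately show ?thesis unfolding pivot_type_def using pn by auto
qed

text \<open>The matrix \<open>g\<close> with its last row replaced by \<open>e\<^sub>p\<^sup>T\<close> and its \<open>p\<close>-th column by \<open>e\<^sub>n\<close>.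
  For \<open>g\<close> of pivot type \<open>p\<close> it differs from \<open>g\<close> by an upper triangular factor, and any two
  such matrices differ by a block diagonal factor.\<close>

definition pivot_mat :: "nat \<Rightarrow> nat \<Rightarrow> complex mat \<Rightarrow> complex mat" where
  "pivot_mat n p g = mat (Suc n) (Suc n)
     (\<lambda>(i,j). if j = p then (if i = n then 1 else 0) else (if i = n then 0 else g $$ (i,j)))"

lemma pivot_mat_carrier: "pivot_mat n p g \<in> carrier_mat (Suc n) (Suc n)"
  unfolding pivot_mat_def by simp

lemma pivot_mat_entry:
  "i < Suc n \<Longrightarrow> j < Suc n \<Longrightarrow> pivot_mat n p g $$ (i,j) =
     (if j = p then (if i = n then 1 else 0) else (if i = n then 0 else g $$ (i,j)))"
  unfolding pivot_mat_def by simp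

lemma pivot_mat_mult_last_row:
  assumes "p \<le> n" "Y \<in> carrier_mat (Suc n) (Suc n)" "l < Suc n"
  shows "(pivot_mat n p g * Y) $$ (n,l) = Y $$ (p,l)"
proof -
  have "(pivot_mat n p g * Y) $$ (n,l) = (\<Sum>t<Suc n. pivot_mat n p g $$ (n,t) * Y $$ (t,l))"
    using assms by (intro index_mult_mat_sum[OF pivot_mat_carrier]) auto
  also have "\<dots> = pivot_mat n p g $$ (n,p) * Y $$ (p,l)"
    using assms by (intro sum_lessThan_single) (auto simp: pivot_mat_entry)
  finally show ?thesis using assms by (simp add: pivot_mat_entry)
qed

lemma mult_pivot_mat_col:
  assumes "p \<le> n" "Y \<in> carrier_mat (Suc n) (Suc n)" "l < Suc n"
  shows "(Y * pivot_mat n p g) $$ (l,p) = Y $$ (l,n)"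
proof -
  have "(Y * pivot_mat n p g) $$ (l,p) = (\<Sum>t<Suc n. Y $$ (l,t) * pivot_mat n p g $$ (t,p))"
    using assms by (intro index_mult_mat_sum[OF _ pivot_mat_carrier]) auto
  also have "\<dots> = Y $$ (l,n) * pivot_mat n p g $$ (n,p)"
    using assms by (intro sum_lessThan_single) (auto simp: pivot_mat_entry)
  finally show ?thesis using assms by (simp add: pivot_mat_entry)
qed

lemma inverse_mult_pivot_mat_entry:
  assumes gh: "inv_pair (Suc n) g h" and lj: "l < Suc n" "j < Suc n"
  shows "(h * pivot_mat n p g) $$ (l,j) =
    (if j = p then h $$ (l,n) else (if l = j then 1 else 0) - h $$ (l,n) * g $$ (n,j))"
proof -
  let ?M = "pivot_mat n p g"
  note c = inv_pairD[OF gh]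
  have e1: "(h * ?M) $$ (l,j) = (\<Sum>i<n. h $$ (l,i) * ?M $$ (i,j)) + h $$ (l,n) * ?M $$ (n,j)"
    using index_mult_mat_sum[OF c(2) pivot_mat_carrier lj] by simp
  have e2: "(h * g) $$ (l,j) = (\<Sum>i<n. h $$ (l,i) * g $$ (i,j)) + h $$ (l,n) * g $$ (n,j)"
    using index_mult_mat_sum[OF c(2) c(1) lj] by simp
  show ?thesis
  proof (cases "j = p")
    case True
    then show ?thesis using e1 lj by (simp add: pivot_mat_entry)
  next
    case False
    have "(\<Sum>i<n. h $$ (l,i) * ?M $$ (i,j)) = (\<Sum>i<n. h $$ (l,i) * g $$ (i,j))"
      using False lj by (intro sum.cong refl) (simp add: pivot_mat_entry)
    then show ?thesis using e1 e2 False lj c(4) by (simp add: pivot_mat_entry)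
  qed
qed

lemma inverse_mult_pivot_mat_upper_tri:
  assumes gh: "inv_pair (Suc n) g h" and t: "pivot_type n p g h"
  shows "h * pivot_mat n p g \<in> upper_tri (Suc n)" "det (h * pivot_mat n p g) \<noteq> 0"
proof -
  let ?N = "Suc n"
  let ?b = "h * pivot_mat n p g"
  note c = inv_pairD[OF gh]
  have pn: "p \<le> n" and tg: "\<And>j. j < p \<Longrightarrow> g $$ (n,j) = 0"
    and th: "\<And>j. p < j \<Longrightarrow> j \<le> n \<Longrightarrow> h $$ (j,n) = 0"
    using t unfolding pivot_type_def by auto
  note b = inverse_mult_pivot_mat_entry[OF gh]
  show bU: "?b \<in> upper_tri ?N"
  proof (rule upper_triI)
    show "?b \<in> carrier_mat ?N ?N" using c pivot_mat_carrier by simp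
    fix l j assume "l < ?N" "j < ?N" "j < l"
    then show "?b $$ (l,j) = 0" using b[of l j] th[of l] tg[of j] by (cases "p < l") auto
  qed
  have "(g * h) $$ (n,n) = g $$ (n,p) * h $$ (p,n)"
    unfolding index_mult_mat_sum[OF c(1,2) lessI lessI] using pn tg th
    by (intro sum_lessThan_single) (auto simp: nat_neq_iff)
  then have hp: "h $$ (p,n) \<noteq> 0" using c(3) by auto
  have "?b $$ (i,i) \<noteq> 0" if "i < ?N" for i
    using b[OF that that] hp tg[of i] th[of i] that by (cases "i < p") auto
  then show "det ?b \<noteq> 0" unfolding upper_tri_det[OF bU] by (subst prod_zero_iff) auto
qed

lemma pivot_mat_det_nonzero:
  assumes gh: "inv_pair (Suc n) g h" and t: "pivot_type n p g h"
  shows "det (pivot_mat n p g) \<noteq> 0"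
proof -
  note c = inv_pairD[OF gh]
  have "pivot_mat n p g = g * (h * pivot_mat n p g)"
    using inv_pair_cancel(1)[OF gh pivot_mat_carrier] by simp
  then have "det (pivot_mat n p g) = det g * det (h * pivot_mat n p g)"
    using det_mult[OF c(1), of "h * pivot_mat n p g"] c(2) pivot_mat_carrier by simp
  then show ?thesis using inverse_mult_pivot_mat_upper_tri(2)[OF gh t] inv_pair_det_nonzero[OF gh] by simp
qed

lemma block_diag_pivot_mat_mult_inverse:
  assumes pn: "p \<le> n" and MX: "inv_pair (Suc n) (pivot_mat n p g1) X"
  shows "block_diag n (pivot_mat n p g2 * X)"
proof -
  let ?N = "Suc n"
  let ?k = "pivot_mat n p g2 * X"
  note c = inv_pairD[OF MX]
  have kc: "?k \<in> carrier_mat ?N ?N" using c pivot_mat_carrier by simp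
  have row: "?k $$ (n,l) = 0" if "l < n" for l
    using pivot_mat_mult_last_row[OF pn c(2), of l g2] pivot_mat_mult_last_row[OF pn c(2), of l g1]
      c(3) that by simp
  have "?k * pivot_mat n p g1 = pivot_mat n p g2 * (X * pivot_mat n p g1)"
    using c pivot_mat_carrier by (simp add: assoc_mult_mat[of _ ?N ?N _ ?N _ ?N])
  then have "?k * pivot_mat n p g1 = pivot_mat n p g2"
    using c(4) right_mult_one_mat[OF pivot_mat_carrier] by simp
  then have col: "?k $$ (l,n) = 0" if "l < n" for l
    using mult_pivot_mat_col[OF pn kc, of l g1] that pn by (simp add: pivot_mat_entry)
  show ?thesis unfolding block_diag_def using row col by (metis le_neq_implies_less)
qed

lemma K_orbit_memI:
  assumes gh1: "inv_pair (Suc n) g1 h1" and gh2: "inv_pair (Suc n) g2 h2"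
    and kk: "inv_pair (Suc n) k k'" "block_diag n k" "block_diag n k'"
    and bb: "inv_pair (Suc n) b b'" "b \<in> upper_tri (Suc n)"
    and g2: "g2 = k * (g1 * b)"
  shows "conj_set g2 h2 (upper_tri (Suc n)) \<in> K_orbit n (conj_set g1 h1 (upper_tri (Suc n)))"
proof -
  let ?N = "Suc n"
  let ?B = "upper_tri ?N"
  have c: "g1 \<in> carrier_mat ?N ?N" "h1 \<in> carrier_mat ?N ?N" "k \<in> carrier_mat ?N ?N"
    "k' \<in> carrier_mat ?N ?N" "b \<in> carrier_mat ?N ?N" "b' \<in> carrier_mat ?N ?N"
    using inv_pairD[OF gh1] inv_pairD[OF kk(1)] inv_pairD[OF bb(1)] by auto
  have bb': "b * (b' * (h1 * k')) = h1 * k'"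
    using inv_pair_cancel(1)[OF bb(1) mult_carrier_mat_square[OF c(2) c(4)]] .
  have gh1': "g1 * (h1 * k') = k'" using inv_pair_cancel(1)[OF gh1 c(4)] .
  have "g2 * (b' * h1 * k') = k * (g1 * (b * (b' * (h1 * k'))))"
    unfolding g2 using c by (simp add: assoc_mult_mat[of _ ?N ?N _ ?N _ ?N])
  also have "\<dots> = k * k'" unfolding bb' gh1' ..
  also have "\<dots> = 1\<^sub>m ?N" by (rule inv_pairD(3)[OF kk(1)])
  finally have inv: "g2 * (b' * h1 * k') = 1\<^sub>m ?N" .
  have h2: "h2 = (b' * h1) * k'"
    using inv_pair_right_unique[OF gh2 _ inv] c by simp
  have "conj_set g2 h2 ?B = conj_set k k' (conj_set (g1 * b) (b' * h1) ?B)"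
    unfolding g2 h2 using conj_set_conj_set[of k ?N k' "g1 * b" "b' * h1" ?B] c upper_tri_subset by simp
  also have "conj_set (g1 * b) (b' * h1) ?B = conj_set g1 h1 (conj_set b b' ?B)"
    using conj_set_conj_set[of g1 ?N h1 b b' ?B] c upper_tri_subset by simp
  also have "conj_set b b' ?B = ?B" by (rule conj_set_upper_tri[OF bb])
  finally have "conj_set g2 h2 ?B = conj_set k k' (conj_set g1 h1 ?B)" .
  then show ?thesis unfolding K_orbit_def using kk by auto
qed

lemma pivot_type_same_K_orbit:
  assumes gh1: "inv_pair (Suc n) g1 h1" and t1: "pivot_type n p g1 h1"
    and gh2: "inv_pair (Suc n) g2 h2" and t2: "pivot_type n p g2 h2"
  shows "conj_set g2 h2 (upper_tri (Suc n)) \<in> K_orbit n (conj_set g1 h1 (upper_tri (Suc n)))"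
proof -
  let ?N = "Suc n"
  have pn: "p \<le> n" using t1 unfolding pivot_type_def by auto
  define M1 where "M1 = pivot_mat n p g1"
  define M2 where "M2 = pivot_mat n p g2"
  have Mc: "M1 \<in> carrier_mat ?N ?N" "M2 \<in> carrier_mat ?N ?N"
    unfolding M1_def M2_def by (auto intro: pivot_mat_carrier)
  obtain X1 where MX1: "inv_pair ?N M1 X1"
    using inv_pair_if_det_nonzero[OF Mc(1)] pivot_mat_det_nonzero[OF gh1 t1] unfolding M1_def by blast
  obtain X2 where MX2: "inv_pair ?N M2 X2"
    using inv_pair_if_det_nonzero[OF Mc(2)] pivot_mat_det_nonzero[OF gh2 t2] unfolding M2_def by blast
  define b1 where "b1 = h1 * M1"
  define b2 where "b2 = h2 * M2"
  have b1: "b1 \<in> upper_tri ?N" "det b1 \<noteq> 0" and b2: "b2 \<in> upper_tri ?N" "det b2 \<noteq> 0"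
    using inverse_mult_pivot_mat_upper_tri[OF gh1 t1] inverse_mult_pivot_mat_upper_tri[OF gh2 t2]
    unfolding b1_def b2_def M1_def M2_def by auto
  obtain e1 where be1: "inv_pair ?N b1 e1"
    using inv_pair_if_det_nonzero[OF upper_triD(1)[OF b1(1)] b1(2)] by blast
  obtain e2 where be2: "inv_pair ?N b2 e2"
    using inv_pair_if_det_nonzero[OF upper_triD(1)[OF b2(1)] b2(2)] by blast
  have c: "g1 \<in> carrier_mat ?N ?N" "g2 \<in> carrier_mat ?N ?N" "X1 \<in> carrier_mat ?N ?N"
    "b1 \<in> carrier_mat ?N ?N" "b2 \<in> carrier_mat ?N ?N" "e2 \<in> carrier_mat ?N ?N"
    using inv_pairD[OF gh1] inv_pairD[OF gh2] inv_pairD[OF MX1] inv_pairD[OF be1] inv_pairD[OF be2]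
    by auto
  have gb1: "g1 * b1 = M1" and gb2: "g2 * b2 = M2"
    unfolding b1_def b2_def using inv_pair_cancel(1)[OF gh1 Mc(1)] inv_pair_cancel(1)[OF gh2 Mc(2)] by auto
  have "M2 * X1 * (g1 * (b1 * e2)) = M2 * (X1 * ((g1 * b1) * e2))"
    using Mc c by (simp add: assoc_mult_mat[of _ ?N ?N _ ?N _ ?N])
  also have "\<dots> = M2 * e2" unfolding gb1 using inv_pair_cancel(2)[OF MX1 c(6)] by simp
  also have "\<dots> = g2 * (b2 * e2)"
    unfolding gb2[symmetric] using c by (simp add: assoc_mult_mat[of _ ?N ?N _ ?N _ ?N])
  also have "\<dots> = g2" using inv_pairD(3)[OF be2] c(2) by simp
  finally have g2: "g2 = M2 * X1 * (g1 * (b1 * e2))" ..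
  show ?thesis
  proof (rule K_orbit_memI[OF gh1 gh2 _ _ _ _ _ g2])
    show "inv_pair ?N (M2 * X1) (M1 * X2)" by (rule inv_pair_mult[OF MX2 inv_pair_sym[OF MX1]])
    show "block_diag n (M2 * X1)" "block_diag n (M1 * X2)"
      unfolding M1_def M2_def using block_diag_pivot_mat_mult_inverse[OF pn] MX1 MX2
      unfolding M1_def M2_def by auto
    show "inv_pair ?N (b1 * e2) (b2 * e1)" by (rule inv_pair_mult[OF be1 inv_pair_sym[OF be2]])
    show "b1 * e2 \<in> upper_tri ?N" using upper_tri_mult[OF b1(1) upper_tri_inverse[OF b2(1) be2]] .
  qed
qed

lemma pivot_type_K_orbit_mem:
  assumes gh: "inv_pair (Suc n) g h" and t: "pivot_type n p g h" and ss: "inv_pair (Suc n) s s'"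
    and mem: "conj_set s s' (upper_tri (Suc n)) \<in> K_orbit n (conj_set g h (upper_tri (Suc n)))"
  shows "pivot_type n p s s'"
proof -
  let ?N = "Suc n"
  let ?B = "upper_tri ?N"
  from mem obtain k k' where kk: "inv_pair ?N k k'" and kb: "block_diag n k" "block_diag n k'"
    and eq0: "conj_set s s' ?B = conj_set k k' (conj_set g h ?B)"
    unfolding K_orbit_def by auto
  note c = inv_pairD[OF gh] inv_pairD[OF kk] inv_pairD[OF ss]
  have mm: "inv_pair ?N (k * g) (h * k')" by (rule inv_pair_mult[OF kk gh])
  note mc = inv_pairD(1,2)[OF mm]
  have eq: "conj_set s s' ?B = conj_set (k * g) (h * k') ?B"
    unfolding eq0 using c upper_tri_subset by (intro conj_set_conj_set) auto
  have "pivot_type n p (k * g * (h * k' * s)) ((s' * (k * g)) * (h * k'))"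
    using pivot_type_mult_block_diag[OF t kb(1) c(5) kb(2) c(6) c(1,2)]
      conj_set_upper_tri_eqD[OF ss mm eq] conj_set_upper_tri_eqD[OF mm ss eq[symmetric]] mc
    by (rule pivot_type_mult_upper_tri)
  moreover have "k * g * (h * k' * s) = s" using inv_pair_cancel(1)[OF mm c(9)] .
  moreover have "(s' * (k * g)) * (h * k') = s'"
    using c mc inv_pairD(3)[OF mm] by (simp add: assoc_mult_mat[of _ ?N ?N _ ?N _ ?N])
  ultimately show ?thesis by simp
qed

lemma pivot_type_K_orbit_closed:
  assumes gh: "inv_pair (Suc n) g h" and t: "pivot_type n p g h"
  shows "flag_closed (Suc n) (K_orbit n (conj_set g h (upper_tri (Suc n))))"
  unfolding flag_closed_def
proof (intro allI impI, elim conjE)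
  fix s s' g0 h0
  assume "\<forall>k. inv_pair (Suc n) (s k) (s' k) \<and>
      conj_set (s k) (s' k) (upper_tri (Suc n)) \<in> K_orbit n (conj_set g h (upper_tri (Suc n)))"
    and gh0: "inv_pair (Suc n) g0 h0" and conv: "mat_converges (Suc n) s g0"
  then have "inv_pair (Suc n) (s k) (s' k) \<and> pivot_type n p (s k) (s' k)" for k
    using pivot_type_K_orbit_mem[OF gh t] by blast
  then have "pivot_type n p g0 h0" using pivot_type_limit gh0 conv by blast
  then show "conj_set g0 h0 (upper_tri (Suc n)) \<in> K_orbit n (conj_set g h (upper_tri (Suc n)))"
    by (rule pivot_type_same_K_orbit[OF gh t gh0])
qed

section \<open>Regular nilpotent elements\<close>

definition mat_family_indep :: "nat \<Rightarrow> nat \<Rightarrow> (nat \<Rightarrow> complex mat) \<Rightarrow> bool" where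
  "mat_family_indep N L F \<longleftrightarrow>
     (\<forall>c. (\<forall>i<N. \<forall>j<N. (\<Sum>l<L. c l * F l $$ (i,j)) = 0) \<longrightarrow> (\<forall>l<L. c l = 0))"

lemma mat_family_indepD:
  "mat_family_indep N L F \<Longrightarrow> (\<And>i j. i < N \<Longrightarrow> j < N \<Longrightarrow> (\<Sum>l<L. c l * F l $$ (i,j)) = 0) \<Longrightarrow>
    l < L \<Longrightarrow> c l = 0"
  unfolding mat_family_indep_def by blast

lemma mat_lin_indep_card_le:
  assumes fin: "finite S" and sub: "S \<subseteq> carrier_mat N N" and li: "mat_lin_indep N S"
  shows "card S \<le> N * N"
proof -
  define flat where "flat A = vec (N * N) (\<lambda>t. A $$ (t div N, t mod N))" for A :: "complex mat"
  have finW: "finite (flat ` S)" using fin by simp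
  interpret vec_space "TYPE(complex)" "N * N" .
  have idx: "i * N + j < N * N" "flat A $ (i * N + j) = A $$ (i,j)" if "i < N" "j < N" for i j A
  proof -
    have "i * N + j < Suc i * N" using that by simp
    also have "\<dots> \<le> N * N" using that by (intro mult_le_mono1) simp
    finally show "i * N + j < N * N" .
    then show "flat A $ (i * N + j) = A $$ (i,j)" unfolding flat_def using that by simp
  qed
  have inj: "inj_on flat S"
  proof (rule inj_onI)
    fix A B assume "A \<in> S" "B \<in> S" and eq: "flat A = flat B"
    then have AB: "A \<in> carrier_mat N N" "B \<in> carrier_mat N N" using sub by auto
    show "A = B"
    proof (rule eq_matI)
      fix i j assume "i < dim_row B" "j < dim_col B"
      then show "A $$ (i,j) = B $$ (i,j)" using AB idx(2)[of i j] eq by (metis carrier_matD)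
    qed (use AB in auto)
  qed
  have Wc: "flat ` S \<subseteq> carrier_vec (N * N)" unfolding flat_def by auto
  have "lin_indpt (flat ` S)"
  proof (rule finite_lin_indpt2[OF finW Wc])
    fix a assume lc: "lincomb a (flat ` S) = 0\<^sub>v (N * N)"
    have "(\<Sum>A\<in>S. a (flat A) * A $$ (i,j)) = 0" if "i < N" "j < N" for i j
    proof -
      have "(\<Sum>A\<in>S. a (flat A) * A $$ (i,j)) = (\<Sum>x\<in>flat ` S. a x * x $ (i * N + j))"
        using idx(2)[OF that] by (simp add: sum.reindex[OF inj])
      also have "\<dots> = lincomb a (flat ` S) $ (i * N + j)" by (rule lincomb_index[OF idx(1)[OF that] Wc, symmetric])
      finally show ?thesis using lc idx(1)[OF that] by simp
    qed
    then have "\<forall>A\<in>S. a (flat A) = 0"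
      using li unfolding mat_lin_indep_def by (elim allE[of _ "\<lambda>A. a (flat A)"]) blast
    then show "\<forall>v\<in>flat ` S. a v = 0" by blast
  qed
  then have "card (flat ` S) \<le> dim" using li_le_dim(2)[OF fin_dim _ _] Wc by simp
  then show ?thesis using card_image[OF inj] dim_is_n by simp
qed

lemma subspace_dim_ge_mat_family:
  assumes ind: "mat_family_indep N L F" and cen: "\<And>l. l < L \<Longrightarrow> F l \<in> centralizer N y"
  shows "L \<le> subspace_dim N (centralizer N y)"
proof -
  have inj: "inj_on F {..<L}"
  proof (rule inj_onI, rule ccontr)
    fix a b assume ab: "a \<in> {..<L}" "b \<in> {..<L}" "F a = F b" "a \<noteq> b"
    define c where "c l = (if l = a then 1 else 0) - (if l = b then 1 else (0::complex))" for l
    have delta: "(\<Sum>l<L. (if l = d then 1 else 0) * X l) = X d" if "d < L" for d and X :: "nat \<Rightarrow> complex"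
      using that by (subst sum_lessThan_single[of d]) auto
    have "(\<Sum>l<L. c l * F l $$ (i,j)) = (\<Sum>l<L. (if l = a then 1 else 0) * F l $$ (i,j)) -
        (\<Sum>l<L. (if l = b then 1 else 0) * F l $$ (i,j))" for i j
      unfolding c_def left_diff_distrib by (rule sum_subtractf)
    then have sums: "(\<Sum>l<L. c l * F l $$ (i,j)) = 0" for i j
      using delta ab(1,2,3) by simp
    have "c a = 0" using ab(1) by (intro mat_family_indepD[OF ind, of c a] sums) simp
    then show False using ab(4) unfolding c_def by simp
  qed
  have li: "mat_lin_indep N (F ` {..<L})"
    unfolding mat_lin_indep_def
  proof (intro allI impI ballI)
    fix c :: "complex mat \<Rightarrow> complex" and A
    assume h: "\<forall>i<N. \<forall>j<N. (\<Sum>A\<in>F ` {..<L}. c A * A $$ (i,j)) = 0" and "A \<in> F ` {..<L}"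
    then obtain l where l: "l < L" "A = F l" by blast
    have "(\<Sum>l<L. c (F l) * F l $$ (i,j)) = 0" if "i < N" "j < N" for i j
      using h that by (simp add: sum.reindex[OF inj])
    from mat_family_indepD[OF ind this l(1)] show "c A = 0" unfolding l(2) .
  qed
  have sub: "F ` {..<L} \<subseteq> centralizer N y" using cen by auto
  show ?thesis
    unfolding subspace_dim_def
  proof (rule Greatest_le_nat[where b = "N * N"])
    show "\<exists>S. finite S \<and> S \<subseteq> centralizer N y \<and> mat_lin_indep N S \<and> card S = L"
      using sub li card_image[OF inj] by (intro exI[of _ "F ` {..<L}"]) simp
    fix d assume "\<exists>S. finite S \<and> S \<subseteq> centralizer N y \<and> mat_lin_indep N S \<and> card S = d"
    then obtain S where "finite S" "S \<subseteq> centralizer N y" "mat_lin_indep N S" "card S = d" by blast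
    moreover have "S \<subseteq> carrier_mat N N" using \<open>S \<subseteq> centralizer N y\<close> unfolding centralizer_def by auto
    ultimately show "d \<le> N * N" using mat_lin_indep_card_le by blast
  qed
qed

lemma mat_family_indep_conj:
  assumes PQ: "inv_pair N P Q" and Fc: "\<And>l. l < L \<Longrightarrow> F l \<in> carrier_mat N N"
    and ind: "mat_family_indep N L F"
  shows "mat_family_indep N L (\<lambda>l. P * F l * Q)"
  unfolding mat_family_indep_def
proof (intro allI impI)
  fix c :: "nat \<Rightarrow> complex" and l
  assume h: "\<forall>i<N. \<forall>j<N. (\<Sum>l<L. c l * (P * F l * Q) $$ (i,j)) = 0" and l: "l < L"
  note c = inv_pairD[OF PQ]
  define Z where "Z = mat N N (\<lambda>(i,j). \<Sum>l<L. c l * F l $$ (i,j))"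
  have Zc: "Z \<in> carrier_mat N N" unfolding Z_def by simp
  have "P * Z * Q = 0\<^sub>m N N"
  proof (rule eq_matI)
    fix i j assume "i < dim_row (0\<^sub>m N N)" "j < dim_col (0\<^sub>m N N)"
    then have ij: "i < N" "j < N" by auto
    have "(P * Z * Q) $$ (i,j) =
        (\<Sum>a<N. \<Sum>b<N. \<Sum>l<L. c l * (P $$ (i,a) * (F l $$ (a,b) * Q $$ (b,j))))"
      unfolding index_conj_mat_sum[OF c(1) Zc c(2) ij] unfolding Z_def
      by (simp add: sum_distrib_left sum_distrib_right mult.assoc mult.left_commute)
    also have "\<dots> = (\<Sum>l<L. \<Sum>a<N. \<Sum>b<N. c l * (P $$ (i,a) * (F l $$ (a,b) * Q $$ (b,j))))"
      by (subst sum.swap) (simp add: sum.swap[of _ "{..<N}" "{..<L}"])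
    also have "\<dots> = (\<Sum>l<L. c l * (P * F l * Q) $$ (i,j))"
      using Fc by (intro sum.cong refl) (simp add: index_conj_mat_sum[OF c(1) _ c(2) ij] sum_distrib_left)
    finally show "(P * Z * Q) $$ (i,j) = 0\<^sub>m N N $$ (i,j)" using h ij by simp
  qed (use c in auto)
  moreover have "Q * (P * Z * Q) * P = (Q * P) * Z * (Q * P)"
    using c(1,2) Zc by (simp add: assoc_mult_mat[of _ N N _ N _ N])
  ultimately have "Z = 0\<^sub>m N N" using c Zc by simp
  then have "(\<Sum>l<L. c l * F l $$ (i,j)) = 0" if "i < N" "j < N" for i j
  proof -
    have "Z $$ (i,j) = 0" using \<open>Z = 0\<^sub>m N N\<close> that by simp
    then show ?thesis unfolding Z_def using that by simp
  qed
  from mat_family_indepD[OF ind this l] show "c l = 0" .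
qed

lemma conj_mat_centralizer:
  assumes PQ: "inv_pair N P Q" and F: "F \<in> carrier_mat N N" and J: "J \<in> carrier_mat N N"
    and FJ: "F * J = J * F"
  shows "P * F * Q \<in> centralizer N (P * J * Q)"
proof -
  note c = inv_pairD[OF PQ]
  have "P * F * Q * (P * J * Q) = P * (F * ((Q * P) * (J * Q)))"
    using c(1,2) F J by (simp add: assoc_mult_mat[of _ N N _ N _ N])
  also have "\<dots> = P * ((F * J) * Q)" using c F J by (simp add: assoc_mult_mat[of _ N N _ N _ N])
  also have "\<dots> = P * (J * ((Q * P) * (F * Q)))"
    unfolding FJ using c F J by (simp add: assoc_mult_mat[of _ N N _ N _ N])
  also have "\<dots> = P * J * Q * (P * F * Q)"
    using c(1,2) F J by (simp add: assoc_mult_mat[of _ N N _ N _ N])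
  finally show ?thesis unfolding centralizer_def using c F by simp
qed

lemma jordan_block_zero_pow_commute:
  fixes a :: complex
  shows "jordan_block k 0 ^\<^sub>m l * jordan_block k a = jordan_block k a * jordan_block k 0 ^\<^sub>m l"
proof -
  let ?J = "jordan_block k (0::complex)"
  have Jc: "?J \<in> carrier_mat k k" and Xc: "?J ^\<^sub>m l \<in> carrier_mat k k" by simp_all
  have eq: "jordan_block k a = ?J + a \<cdot>\<^sub>m 1\<^sub>m k" by (rule eq_matI) auto
  have c: "?J ^\<^sub>m l * ?J = ?J * ?J ^\<^sub>m l" using pow_mat_Suc_left[OF Jc, of l] by simp
  have "?J ^\<^sub>m l * (?J + a \<cdot>\<^sub>m 1\<^sub>m k) = ?J ^\<^sub>m l * ?J + ?J ^\<^sub>m l * (a \<cdot>\<^sub>m 1\<^sub>m k)"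
    by (rule mult_add_distrib_mat[OF Xc Jc], simp)
  also have "?J ^\<^sub>m l * (a \<cdot>\<^sub>m 1\<^sub>m k) = a \<cdot>\<^sub>m ?J ^\<^sub>m l"
    using mult_smult_distrib[OF Xc, of "1\<^sub>m k" k a] Xc by simp
  also have "?J ^\<^sub>m l * ?J + a \<cdot>\<^sub>m ?J ^\<^sub>m l = ?J * ?J ^\<^sub>m l + (a \<cdot>\<^sub>m 1\<^sub>m k) * ?J ^\<^sub>m l"
    using c mult_smult_assoc_mat[of "1\<^sub>m k" k k "?J ^\<^sub>m l" k a] Xc by simp
  also have "\<dots> = (?J + a \<cdot>\<^sub>m 1\<^sub>m k) * ?J ^\<^sub>m l"
    by (rule add_mult_distrib_mat[symmetric, OF Jc _ Xc], simp)
  finally show ?thesis unfolding eq .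
qed

lemma four_block_diag_commute:
  assumes "A \<in> carrier_mat k k" "A' \<in> carrier_mat k k" "D \<in> carrier_mat m m" "D' \<in> carrier_mat m m"
    "A * A' = A' * A" "D * D' = D' * D"
  shows "four_block_mat A (0\<^sub>m k m) (0\<^sub>m m k) D * four_block_mat A' (0\<^sub>m k m) (0\<^sub>m m k) D' =
         four_block_mat A' (0\<^sub>m k m) (0\<^sub>m m k) D' * four_block_mat A (0\<^sub>m k m) (0\<^sub>m m k) D"
  using assms
  by (simp add: mult_four_block_mat[OF assms(1) zero_carrier_mat zero_carrier_mat assms(3) assms(2)
        zero_carrier_mat zero_carrier_mat assms(4)]
      mult_four_block_mat[OF assms(2) zero_carrier_mat zero_carrier_mat assms(4) assms(1)
        zero_carrier_mat zero_carrier_mat assms(3)])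

definition block_diag_family ::
    "nat \<Rightarrow> nat \<Rightarrow> (nat \<Rightarrow> complex mat) \<Rightarrow> (nat \<Rightarrow> complex mat) \<Rightarrow> nat \<Rightarrow> complex mat" where
  "block_diag_family k m A G l =
     (if l < k then four_block_mat (A l) (0\<^sub>m k m) (0\<^sub>m m k) (0\<^sub>m m m)
      else four_block_mat (0\<^sub>m k k) (0\<^sub>m k m) (0\<^sub>m m k) (G (l - k)))"

lemma block_diag_family_carrier:
  "(\<And>l. l < k \<Longrightarrow> A l \<in> carrier_mat k k) \<Longrightarrow> (\<And>t. t < m \<Longrightarrow> G t \<in> carrier_mat m m) \<Longrightarrow>
    l < k + m \<Longrightarrow> block_diag_family k m A G l \<in> carrier_mat (k + m) (k + m)"
  unfolding block_diag_family_def by auto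

lemma block_diag_family_upper_right:
  assumes "\<And>l. l < k \<Longrightarrow> A l \<in> carrier_mat k k" "\<And>t. t < m \<Longrightarrow> G t \<in> carrier_mat m m"
    and "l < k + m" "i < k" "j < m"
  shows "block_diag_family k m A G l $$ (i, k + j) = 0"
proof (cases "l < k")
  case False
  then have "G (l - k) \<in> carrier_mat m m" using assms(2,3) by simp
  then show ?thesis using False assms(4,5) by (simp add: block_diag_family_def)
next
  case True
  then have "A l \<in> carrier_mat k k" using assms(1) by simp
  then show ?thesis using True assms(4,5) by (simp add: block_diag_family_def)
qed

lemma block_diag_family_commute:
  assumes JB: "JB \<in> carrier_mat k k" and JR: "JR \<in> carrier_mat m m"
    and A: "\<And>l. l < k \<Longrightarrow> A l \<in> carrier_mat k k \<and> A l * JB = JB * A l"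
    and G: "\<And>t. t < m \<Longrightarrow> G t \<in> carrier_mat m m \<and> G t * JR = JR * G t"
    and l: "l < k + m"
  shows "block_diag_family k m A G l * four_block_mat JB (0\<^sub>m k m) (0\<^sub>m m k) JR =
         four_block_mat JB (0\<^sub>m k m) (0\<^sub>m m k) JR * block_diag_family k m A G l"
proof (cases "l < k")
  case True
  then show ?thesis unfolding block_diag_family_def
    using four_block_diag_commute[of "A l" k JB "0\<^sub>m m m" m JR] A JB JR by simp
next
  case False
  then show ?thesis unfolding block_diag_family_def
    using four_block_diag_commute[of "0\<^sub>m k k" k JB "G (l - k)" m JR] G[of "l - k"] JB JR l by simp
qed

lemma block_diag_family_indep:
  assumes A: "\<And>l. l < k \<Longrightarrow> A l \<in> carrier_mat k k" and Aind: "mat_family_indep k k A"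
    and G: "\<And>t. t < m \<Longrightarrow> G t \<in> carrier_mat m m" and Gind: "mat_family_indep m m G"
  shows "mat_family_indep (k + m) (k + m) (block_diag_family k m A G)"
  unfolding mat_family_indep_def
proof (intro allI impI)
  let ?F = "block_diag_family k m A G"
  fix c :: "nat \<Rightarrow> complex" and l
  assume h: "\<forall>i<k+m. \<forall>j<k+m. (\<Sum>l<k+m. c l * ?F l $$ (i,j)) = 0" and l: "l < k + m"
  have split: "(\<Sum>l<k+m. f l) = (\<Sum>l<k. f l) + (\<Sum>t<m. f (k+t))" for f :: "nat \<Rightarrow> complex"
    by (induct m) (auto simp: ac_simps)
  have FA: "?F l $$ (i,j) = A l $$ (i,j)" if "l < k" "i < k" "j < k" for l i j
    using A[OF that(1)] that by (simp add: block_diag_family_def)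
  have FA': "?F l $$ (k+i,k+j) = 0" if "l < k" "i < m" "j < m" for l i j
    using A[OF that(1)] that by (simp add: block_diag_family_def)
  have FG: "?F (k+t) $$ (i,j) = 0" if "t < m" "i < k" "j < k" for t i j
    using G[OF that(1)] that by (simp add: block_diag_family_def)
  have FG': "?F (k+t) $$ (k+i,k+j) = G t $$ (i,j)" if "t < m" "i < m" "j < m" for t i j
    using G[OF that(1)] that by (simp add: block_diag_family_def)
  have "(\<Sum>l<k. c l * A l $$ (i,j)) = 0" if "i < k" "j < k" for i j
  proof -
    have "(\<Sum>l<k. c l * ?F l $$ (i,j)) = (\<Sum>l<k. c l * A l $$ (i,j))"
      using FA[OF _ that] by (intro sum.cong) auto
    moreover have "(\<Sum>t<m. c (k+t) * ?F (k+t) $$ (i,j)) = 0"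
      using FG[OF _ that] by (intro sum.neutral) auto
    ultimately have "(\<Sum>l<k+m. c l * ?F l $$ (i,j)) = (\<Sum>l<k. c l * A l $$ (i,j))"
      unfolding split by simp
    then show ?thesis using h that by simp
  qed
  from mat_family_indepD[OF Aind this] have cA: "l < k \<Longrightarrow> c l = 0" for l .
  have "(\<Sum>t<m. c (k+t) * G t $$ (i,j)) = 0" if "i < m" "j < m" for i j
  proof -
    have "(\<Sum>l<k. c l * ?F l $$ (k+i,k+j)) = 0"
      using FA'[OF _ that] by (intro sum.neutral) auto
    moreover have "(\<Sum>t<m. c (k+t) * ?F (k+t) $$ (k+i,k+j)) = (\<Sum>t<m. c (k+t) * G t $$ (i,j))"
      using FG'[OF _ that] by (intro sum.cong) auto
    ultimately have "(\<Sum>l<k+m. c l * ?F l $$ (k+i,k+j)) = (\<Sum>t<m. c (k+t) * G t $$ (i,j))"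
      unfolding split by simp
    then show ?thesis using h that by simp
  qed
  from mat_family_indepD[OF Gind this] have cG: "t < m \<Longrightarrow> c (k+t) = 0" for t .
  show "c l = 0"
  proof (cases "l < k")
    case False
    then show ?thesis using cG[of "l - k"] l by simp
  qed (rule cA)
qed

lemma jordan_block_zero_pow_indep: "mat_family_indep k k (\<lambda>l. jordan_block k (0::complex) ^\<^sub>m l)"
  unfolding mat_family_indep_def
proof (intro allI impI)
  fix c :: "nat \<Rightarrow> complex" and l
  assume h: "\<forall>i<k. \<forall>j<k. (\<Sum>l<k. c l * (jordan_block k 0 ^\<^sub>m l) $$ (i,j)) = 0" and l: "l < k"
  have "(\<Sum>l'<k. c l' * (jordan_block k 0 ^\<^sub>m l') $$ (0,l)) = c l"
    unfolding jordan_block_zero_pow using l by (subst sum_lessThan_single[of l]) auto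
  then show "c l = 0" using h l by simp
qed

lemma jordan_matrix_commuting_family:
  "\<exists>F. mat_family_indep (sum_list (map fst n_as)) (sum_list (map fst n_as)) F \<and>
     (\<forall>l<sum_list (map fst n_as). F l \<in> carrier_mat (sum_list (map fst n_as)) (sum_list (map fst n_as)) \<and>
        F l * jordan_matrix n_as = jordan_matrix n_as * (F l :: complex mat))"
proof (induct n_as)
  case Nil
  show ?case unfolding mat_family_indep_def by simp
next
  case (Cons ka R)
  obtain k a where ka: "ka = (k,a)" by fastforce
  let ?m = "sum_list (map fst R)"
  from Cons obtain G where Gind: "mat_family_indep ?m ?m G"
    and G: "\<forall>t<?m. G t \<in> carrier_mat ?m ?m \<and> G t * jordan_matrix R = jordan_matrix R * G t" by blast
  let ?F = "block_diag_family k ?m (\<lambda>l. jordan_block k 0 ^\<^sub>m l) G"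
  have "mat_family_indep (k + ?m) (k + ?m) ?F"
    using G by (intro block_diag_family_indep jordan_block_zero_pow_indep Gind) auto
  moreover have "?F l \<in> carrier_mat (k + ?m) (k + ?m)" "?F l * jordan_matrix (ka # R) = jordan_matrix (ka # R) * ?F l"
    if "l < k + ?m" for l
    using that G unfolding ka jordan_matrix_Cons
    by (auto intro!: block_diag_family_carrier block_diag_family_commute jordan_block_zero_pow_commute)
  ultimately show ?case unfolding ka by (intro exI[of _ ?F]) simp
qed

lemma mat_family_indep_extend:
  assumes ind: "mat_family_indep N L F" and ij: "i0 < N" "j0 < N"
    and F0: "\<And>l. l < L \<Longrightarrow> F l $$ (i0,j0) = 0" and E: "E $$ (i0,j0) \<noteq> 0"
  shows "mat_family_indep N (Suc L) (\<lambda>l. if l < L then F l else E)"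
  unfolding mat_family_indep_def
proof (intro allI impI)
  fix c :: "nat \<Rightarrow> complex" and l
  assume h: "\<forall>i<N. \<forall>j<N. (\<Sum>l<Suc L. c l * (if l < L then F l else E) $$ (i,j)) = 0" and l: "l < Suc L"
  have split: "(\<Sum>l<Suc L. c l * (if l < L then F l else E) $$ (i,j)) =
      (\<Sum>l<L. c l * F l $$ (i,j)) + c L * E $$ (i,j)" for i j
    by (simp add: sum.cong[OF refl, of "{..<L}" "\<lambda>l. c l * (if l < L then F l else E) $$ (i,j)"])
  have "(\<Sum>l<L. c l * F l $$ (i0,j0)) = 0" using F0 by (intro sum.neutral) auto
  then have "c L * E $$ (i0,j0) = 0" using h[rule_format, OF ij] split[of i0 j0] by simp
  then have cL: "c L = 0" using E by simp
  have "(\<Sum>l<L. c l * F l $$ (i,j)) = 0" if "i < N" "j < N" for i j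
    using h that split[of i j] cL by simp
  from mat_family_indepD[OF ind this] show "c l = 0" using cL l less_Suc_eq by auto
qed

lemma four_block_upper_right_commute:
  assumes JB: "JB \<in> carrier_mat k k" and JR: "JR \<in> carrier_mat m m" and X: "X \<in> carrier_mat k m"
    and JBX: "JB * X = 0\<^sub>m k m" and XJR: "X * JR = 0\<^sub>m k m"
  shows "four_block_mat (0\<^sub>m k k) X (0\<^sub>m m k) (0\<^sub>m m m) * four_block_mat JB (0\<^sub>m k m) (0\<^sub>m m k) JR =
         four_block_mat JB (0\<^sub>m k m) (0\<^sub>m m k) JR * four_block_mat (0\<^sub>m k k) X (0\<^sub>m m k) (0\<^sub>m m m)"
  using JBX XJR JB JR X
  by (simp add: mult_four_block_mat[OF zero_carrier_mat X zero_carrier_mat zero_carrier_mat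
        JB zero_carrier_mat zero_carrier_mat JR]
      mult_four_block_mat[OF JB zero_carrier_mat zero_carrier_mat JR
        zero_carrier_mat X zero_carrier_mat zero_carrier_mat])

text \<open>If the nilpotent Jordan block \<open>J\<^sub>k(0)\<close> sits next to a singular \<open>J\<^sub>R\<close>, a left null vector
  \<open>v\<close> of \<open>J\<^sub>R\<close> placed in the first row of the off-diagonal block commutes with \<open>J\<^sub>k(0) \<oplus> J\<^sub>R\<close>.\<close>

lemma off_diagonal_commuting_mat:
  fixes JR :: "complex mat"
  assumes k: "k > 0" and JR: "JR \<in> carrier_mat m m" "det JR = 0"
  obtains E j0 where "j0 < m" "E \<in> carrier_mat (k+m) (k+m)" "E $$ (0, k+j0) \<noteq> 0"
    "E * four_block_mat (jordan_block k 0) (0\<^sub>m k m) (0\<^sub>m m k) JR =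
     four_block_mat (jordan_block k 0) (0\<^sub>m k m) (0\<^sub>m m k) JR * E"
proof -
  let ?JB = "jordan_block k (0::complex)"
  have "det (transpose_mat JR) = 0" using det_transpose[OF JR(1)] JR(2) by simp
  then obtain v where v: "v \<in> carrier_vec m" "v \<noteq> 0\<^sub>v m" "transpose_mat JR *\<^sub>v v = 0\<^sub>v m"
    using det_0_iff_vec_prod_zero[of "transpose_mat JR" m] JR(1) by auto
  obtain j0 where j0: "j0 < m" "v $ j0 \<noteq> 0"
    using v(1,2) by (metis carrier_vecD eq_vecI index_zero_vec(1,2))
  define X where "X = mat k m (\<lambda>(i,j). if i = 0 then v $ j else 0)"
  have Xc: "X \<in> carrier_mat k m" unfolding X_def by simp
  have "?JB * X = 0\<^sub>m k m"
  proof (rule eq_matI)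
    fix i j assume "i < dim_row (0\<^sub>m k m)" "j < dim_col (0\<^sub>m k m)"
    then have ij: "i < k" "j < m" by auto
    have "(?JB * X) $$ (i,j) = (\<Sum>l<k. ?JB $$ (i,l) * X $$ (l,j))"
      by (rule index_mult_mat_sum[OF jordan_block_carrier Xc ij])
    also have "\<dots> = 0" using ij by (intro sum.neutral) (auto simp: X_def)
    finally show "(?JB * X) $$ (i,j) = 0\<^sub>m k m $$ (i,j)" using ij by simp
  qed (use Xc in auto)
  moreover have "X * JR = 0\<^sub>m k m"
  proof (rule eq_matI)
    fix i j assume "i < dim_row (0\<^sub>m k m)" "j < dim_col (0\<^sub>m k m)"
    then have ij: "i < k" "j < m" by auto
    have "(X * JR) $$ (i,j) = (\<Sum>l<m. X $$ (i,l) * JR $$ (l,j))"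
      by (rule index_mult_mat_sum[OF Xc JR(1) ij])
    also have "\<dots> = (if i = 0 then (\<Sum>l<m. v $ l * JR $$ (l,j)) else 0)"
      unfolding X_def using ij by (cases "i = 0") simp_all
    also have "(\<Sum>l<m. v $ l * JR $$ (l,j)) = (transpose_mat JR *\<^sub>v v) $ j"
      using ij JR(1) v(1) by (simp add: scalar_prod_def lessThan_atLeast0 mult.commute)
    finally show "(X * JR) $$ (i,j) = 0\<^sub>m k m $$ (i,j)" using v(3) ij by simp
  qed (use Xc JR in auto)
  ultimately have comm: "four_block_mat (0\<^sub>m k k) X (0\<^sub>m m k) (0\<^sub>m m m) * four_block_mat ?JB (0\<^sub>m k m) (0\<^sub>m m k) JR =
      four_block_mat ?JB (0\<^sub>m k m) (0\<^sub>m m k) JR * four_block_mat (0\<^sub>m k k) X (0\<^sub>m m k) (0\<^sub>m m m)"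
    by (intro four_block_upper_right_commute[OF jordan_block_carrier JR(1) Xc])
  have "four_block_mat (0\<^sub>m k k) X (0\<^sub>m m k) (0\<^sub>m m m) $$ (0, k+j0) \<noteq> 0"
    using k j0 Xc by (simp add: X_def)
  then show ?thesis using that[OF j0(1) _ _ comm] Xc by simp
qed

lemma jordan_matrix_Cons_pow_zero:
  fixes a :: complex and R :: "(nat \<times> complex) list"
  defines "m \<equiv> sum_list (map fst R)"
  assumes k: "k > 0" and JK: "jordan_matrix ((k,a) # R) ^\<^sub>m K = 0\<^sub>m (k+m) (k+m)"
  shows "a = 0" "jordan_matrix R ^\<^sub>m K = 0\<^sub>m m m"
proof -
  let ?JB = "jordan_block k a" and ?JR = "jordan_matrix R"
  have JRc: "?JR \<in> carrier_mat m m" unfolding m_def by simp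
  have JRK: "?JR ^\<^sub>m K \<in> carrier_mat m m" using JRc by simp
  have blocks: "four_block_mat (?JB ^\<^sub>m K) (0\<^sub>m k m) (0\<^sub>m m k) (?JR ^\<^sub>m K) = 0\<^sub>m (k+m) (k+m)"
    using JK unfolding m_def jordan_matrix_Cons pow_four_block_mat[OF jordan_block_carrier JRc[unfolded m_def]] .
  have "a ^ K = (?JB ^\<^sub>m K) $$ (0,0)" unfolding jordan_block_pow using k by simp
  also have "\<dots> = 0"
    using arg_cong[OF blocks, of "\<lambda>M. M $$ (0,0)"] k JRK by (simp del: pow_mat_dim)
  finally show "a = 0" by simp
  show "?JR ^\<^sub>m K = 0\<^sub>m m m"
  proof (rule eq_matI)
    fix i j assume "i < dim_row (0\<^sub>m m m)" "j < dim_col (0\<^sub>m m m)"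
    then show "(?JR ^\<^sub>m K) $$ (i,j) = 0\<^sub>m m m $$ (i,j)"
      using arg_cong[OF blocks, of "\<lambda>M. M $$ (k+i,k+j)"] JRK by (simp del: pow_mat_dim)
  qed (use JRc in auto)
qed

lemma jordan_matrix_extra_commuting_family:
  fixes a :: complex and R :: "(nat \<times> complex) list"
  defines "m \<equiv> sum_list (map fst R)"
  assumes k: "k > 0" and m: "m > 0"
    and JK: "jordan_matrix ((k,a) # R) ^\<^sub>m K = 0\<^sub>m (k+m) (k+m)"
  shows "\<exists>F. mat_family_indep (k+m) (Suc (k+m)) F \<and> (\<forall>l<Suc (k+m). F l \<in> carrier_mat (k+m) (k+m) \<and>
     F l * jordan_matrix ((k,a) # R) = jordan_matrix ((k,a) # R) * F l)"
proof -
  let ?JB = "jordan_block k a" and ?JR = "jordan_matrix R"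
  have JRc: "?JR \<in> carrier_mat m m" unfolding m_def by simp
  have J: "jordan_matrix ((k,a) # R) = four_block_mat ?JB (0\<^sub>m k m) (0\<^sub>m m k) ?JR"
    unfolding m_def jordan_matrix_Cons ..
  note a0 = jordan_matrix_Cons_pow_zero(1)[OF k JK[unfolded m_def]]
  have "?JR ^\<^sub>m K = 0\<^sub>m m m"
    using jordan_matrix_Cons_pow_zero(2)[OF k JK[unfolded m_def]] unfolding m_def .
  then have "det ?JR = 0" using det_pow_mat[OF JRc, of K] m by simp
  then obtain E j0 where E: "j0 < m" "E \<in> carrier_mat (k+m) (k+m)" "E $$ (0, k+j0) \<noteq> 0"
    "E * four_block_mat (jordan_block k 0) (0\<^sub>m k m) (0\<^sub>m m k) ?JR =
     four_block_mat (jordan_block k 0) (0\<^sub>m k m) (0\<^sub>m m k) ?JR * E"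
    using off_diagonal_commuting_mat[OF k JRc] by blast
  obtain G where Gind: "mat_family_indep m m G"
    and G: "\<forall>t<m. G t \<in> carrier_mat m m \<and> G t * ?JR = ?JR * G t"
    using jordan_matrix_commuting_family[of R] unfolding m_def by blast
  define F0 where "F0 = block_diag_family k m (\<lambda>l. jordan_block k 0 ^\<^sub>m l) G"
  have F0ind: "mat_family_indep (k+m) (k+m) F0"
    unfolding F0_def using G by (intro block_diag_family_indep jordan_block_zero_pow_indep Gind) auto
  have F0: "F0 l \<in> carrier_mat (k+m) (k+m)"
    "F0 l * jordan_matrix ((k,a) # R) = jordan_matrix ((k,a) # R) * F0 l"
    "F0 l $$ (0, k+j0) = 0" if "l < k + m" for l
    unfolding F0_def J unfolding a0 using that G k E(1) JRc
    by (auto intro!: block_diag_family_carrier block_diag_family_commute block_diag_family_upper_right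
        jordan_block_zero_pow_commute)
  have "mat_family_indep (k+m) (Suc (k+m)) (\<lambda>l. if l < k + m then F0 l else E)"
    using k E(1,3) F0(3) by (intro mat_family_indep_extend[OF F0ind]) auto
  moreover have "\<forall>l<Suc (k+m). (if l < k + m then F0 l else E) \<in> carrier_mat (k+m) (k+m) \<and>
      (if l < k + m then F0 l else E) * jordan_matrix ((k,a) # R) =
      jordan_matrix ((k,a) # R) * (if l < k + m then F0 l else E)"
    using F0(1,2) E(2,4) unfolding J unfolding a0 by auto
  ultimately show ?thesis by blast
qed

lemma regular_nilpotent_pow_nonzero:
  assumes y: "y \<in> carrier_mat (Suc n) (Suc n)" and nil: "y ^\<^sub>m K = 0\<^sub>m (Suc n) (Suc n)"
    and reg: "regular_mat (Suc n) y"
  shows "y ^\<^sub>m n \<noteq> 0\<^sub>m (Suc n) (Suc n)"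
proof
  assume z: "y ^\<^sub>m n = 0\<^sub>m (Suc n) (Suc n)"
  obtain as where "char_poly y = (\<Prod>a\<leftarrow>as. [:- a, 1:])" using char_poly_factorized[OF y] by blast
  then obtain n_as where jnf: "jordan_nf y n_as" using jordan_nf_exists[OF y] by blast
  have nz: "0 \<notin> fst ` set n_as" and "similar_mat y (jordan_matrix n_as)"
    using jnf unfolding jordan_nf_def by auto
  then obtain P Q where PQ: "similar_mat_wit y (jordan_matrix n_as) P Q"
    unfolding similar_mat_def by blast
  let ?J = "jordan_matrix n_as"
  have PQi: "inv_pair (Suc n) P Q" and Jc: "?J \<in> carrier_mat (Suc n) (Suc n)" and yPJQ: "y = P * ?J * Q"
    using PQ y unfolding similar_mat_wit_def inv_pair_def by (auto simp: Let_def)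
  have Jpow: "?J ^\<^sub>m e = Q * (y ^\<^sub>m e) * P" for e
    using similar_mat_wit_pow_id[OF similar_mat_wit_sym[OF PQ]] .
  have JK: "?J ^\<^sub>m K = 0\<^sub>m (Suc n) (Suc n)" and Jn: "?J ^\<^sub>m n = 0\<^sub>m (Suc n) (Suc n)"
    unfolding Jpow nil z using inv_pairD[OF PQi] by simp_all
  have sumM: "sum_list (map fst n_as) = Suc n"
    using jordan_matrix_dim(1)[of n_as] Jc unfolding carrier_mat_def by simp
  then obtain k a R where nas: "n_as = (k,a) # R" by (cases n_as) auto
  have k: "k > 0" using nz nas by force
  show False
  proof (cases R)
    case Nil
    then have "?J = jordan_block k a" unfolding nas jordan_matrix_def by (simp del: diag_block_mat.simps)
    moreover have "k = Suc n" using sumM unfolding nas Nil by simp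
    ultimately have J: "?J = jordan_block (Suc n) a" by simp
    have "a ^ K = 0" using arg_cong[OF JK, of "\<lambda>M. M $$ (0,0)"] unfolding J jordan_block_pow by simp
    then have "(?J ^\<^sub>m n) $$ (0,n) = 1" unfolding J by (simp add: jordan_block_zero_pow)
    then show False using Jn by simp
  next
    case (Cons r rs)
    have m: "sum_list (map fst R) > 0" using nz unfolding nas Cons by (cases r) force
    obtain F where Find: "mat_family_indep (Suc n) (Suc (Suc n)) F"
      and F: "\<forall>l<Suc (Suc n). F l \<in> carrier_mat (Suc n) (Suc n) \<and> F l * ?J = ?J * F l"
      using jordan_matrix_extra_commuting_family[OF k m, of a K] JK sumM unfolding nas by auto
    have "Suc (Suc n) \<le> subspace_dim (Suc n) (centralizer (Suc n) y)"
    proof (rule subspace_dim_ge_mat_family)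
      show "mat_family_indep (Suc n) (Suc (Suc n)) (\<lambda>l. P * F l * Q)"
        using F by (intro mat_family_indep_conj[OF PQi _ Find]) auto
      show "P * F l * Q \<in> centralizer (Suc n) y" if "l < Suc (Suc n)" for l
        unfolding yPJQ using F that Jc by (intro conj_mat_centralizer[OF PQi]) auto
    qed
    then show False using reg unfolding regular_mat_def by simp
  qed
qed

theorem theorem3p7:
  fixes n :: nat and g h :: "complex mat"
  assumes "n \<ge> 1"
    and "inv_pair (n+1) g h"
    and "\<not> flag_closed (n+1) (K_orbit n (conj_set g h (upper_tri (n+1))))"
  shows "\<forall>y \<in> conj_set g h (strict_upper_tri (n+1)).
           regular_mat (n+1) y \<longrightarrow> \<not> nilpotent_mat (n+1) (proj_k n y)"
proof (intro ballI impI notI)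
  fix y
  assume "y \<in> conj_set g h (strict_upper_tri (n+1))" and reg: "regular_mat (n+1) y"
    and nil: "nilpotent_mat (n+1) (proj_k n y)"
  have gh: "inv_pair (Suc n) g h" using assms(2) by simp
  note c = inv_pairD[OF gh]
  obtain u where u: "u \<in> strict_upper_tri (Suc n)" and y: "y = g * u * h"
    using \<open>y \<in> _\<close> unfolding conj_set_def by auto
  note uc = strict_upper_triD(1)[OF u]
  have yc: "y \<in> carrier_mat (Suc n) (Suc n)" unfolding y using c uc by simp
  have "y ^\<^sub>m Suc n = 0\<^sub>m (Suc n) (Suc n)"
    unfolding y pow_mat_conj[OF gh uc] strict_upper_tri_nilpotent[OF u] using c by simp
  then have "y ^\<^sub>m n \<noteq> 0\<^sub>m (Suc n) (Suc n)"
    using regular_nilpotent_pow_nonzero[OF yc _ reg[simplified]] by blast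
  then obtain p where "pivot_type n p g h"
    using pivot_type_if_proj_k_nilpotent[OF gh u] nil unfolding y by auto
  then show False using pivot_type_K_orbit_closed[OF gh] assms(3) by simp
qed

end
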